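(* For every finite $J\subset\mathbb N_+$, the elements of $\mathcal B_J$ are $P$-cycles in $W_J$ and their classes form an $\mathbb F_2$-basis of $\mathcal M(W_J,P)\cong\mathcal M(M_J,P)$.
   Context: Over $\mathbb F_2$, $R=\Lambda(t_i:i\ge1)\otimes\Lambda(x_i:i\ge1)$ with basis the monomials $t_Ix_J$ ($t_I=\prod_{i\in I}t_i$, $x_J=\prod_{j\in J}x_j$, $t_It_K=0$ if $I\cap K\neq\emptyset$), with linear operators $Q_1(t_Ix_J)=\sum_{j\in J}t_jt_Ix_{J\setminus\{j\}}$, $P(t_Ix_J)=\sum_{K\subseteq J,|K|=2}t_Kt_Ix_{J\setminus K}$. For finite $J$, $W_J=\operatorname{span}\{t_Ix_{J\setminus I}:I\subseteq J\}$, isomorphic as a $\Lambda(Q_1,P)$-module to $M_J=\bigotimes_{j\in J}M_j$ ($M_j$ with basis $t_j,x_j$, $Q_1x_j=t_j$, $P=0$, tensor action via $\Delta(P)=P\otimes1+Q_1\otimes Q_1+1\otimes P$). Exchange: $(t_Ix_J)^e=t_Jx_I$. Sets $\mathcal B_{[n]}$: $\mathcal B_{[0]}=\{1\}$; given $\mathcal B_{[2t]}$, $\mathcal B_{[2t+1]}=\{Q_1(b\,x_{2t+1})\}\cup\{Q_1(b\,x_{2t+1})^e\}$ and $\mathcal B_{[2t+2]}=\{Q_1(b\,x_{2t+1})x_{2t+2}\}\cup\{Q_1(b\,x_{2t+1})^e\,t_{2t+2}\}$, $b\in\mathcal B_{[2t]}$. For $|J|=n$ let $\phi_J:[n]\to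 J$ be the order-preserving bijection and $(\phi_J)_*:R\to R$ the algebra map $t_i\mapsto t_{\phi_J(i)}$, $x_i\mapsto x_{\phi_J(i)}$ for $i\le n$; then $\mathcal B_J=(\phi_J)_*(\mathcal B_{[n]})$. *)

theory Defs
  imports Main
begin

text \<open>Elements of R over F_2 are represented as finite sets of basis monomials
  t_I x_J, a monomial being the pair (I, J) of finite sets of positive indices.
  Addition is symmetric difference.\<close>

type_synonym mono = "nat set \<times> nat set"
type_synonym relt = "mono set"

definition radd :: "relt \<Rightarrow> relt \<Rightarrow> relt" where
  "radd a b = (a - b) \<union> (b - a)"

definition sumF :: "('i \<Rightarrow> relt) \<Rightarrow> 'i set \<Rightarrow> relt" where
  "sumF f A = {m. odd (card {a \<in> A. m \<in> f a})}"

definition one :: relt where "one = {({}, {})}"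
definition tv :: "nat \<Rightarrow> relt" where "tv i = {({i}, {})}"
definition xv :: "nat \<Rightarrow> relt" where "xv i = {({}, {i})}"

definition mmul :: "mono \<Rightarrow> mono \<Rightarrow> relt" where
  "mmul p q = (if fst p \<inter> fst q = {} \<and> snd p \<inter> snd q = {}
               then {(fst p \<union> fst q, snd p \<union> snd q)} else {})"

definition rmul :: "relt \<Rightarrow> relt \<Rightarrow> relt" where
  "rmul a b = sumF (\<lambda>(p, q). mmul p q) (a \<times> b)"

definition Q1m :: "mono \<Rightarrow> relt" where
  "Q1m m = sumF (\<lambda>j. mmul ({j}, {}) (fst m, snd m - {j})) (snd m)"

definition Q1 :: "relt \<Rightarrow> relt" where
  "Q1 a = sumF Q1m a"

definition Pm :: "mono \<Rightarrow> relt" where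
  "Pm m = sumF (\<lambda>K. mmul (K, {}) (fst m, snd m - K)) {K. K \<subseteq> snd m \<and> card K = 2}"

definition Pop :: "relt \<Rightarrow> relt" where
  "Pop a = sumF Pm a"

definition exch :: "relt \<Rightarrow> relt" where
  "exch a = (\<lambda>(I, J). (J, I)) ` a"

text \<open>The sets B_[2t] (Beven t) and B_[2t+1] (Bodd t).\<close>
fun Beven :: "nat \<Rightarrow> relt set" where
  "Beven 0 = {one}"
| "Beven (Suc t) =
     {rmul (Q1 (rmul b (xv (2*t+1)))) (xv (2*t+2)) | b. b \<in> Beven t}
   \<union> {rmul (exch (Q1 (rmul b (xv (2*t+1))))) (tv (2*t+2)) | b. b \<in> Beven t}"

definition Bodd :: "nat \<Rightarrow> relt set" where
  "Bodd t = {Q1 (rmul b (xv (2*t+1))) | b. b \<in> Beven t}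
          \<union> {exch (Q1 (rmul b (xv (2*t+1)))) | b. b \<in> Beven t}"

definition Bn :: "nat \<Rightarrow> relt set" where
  "Bn n = (if even n then Beven (n div 2) else Bodd (n div 2))"

definition phi :: "nat set \<Rightarrow> nat \<Rightarrow> nat" where
  "phi J i = sorted_list_of_set J ! (i - 1)"

definition relabel :: "(nat \<Rightarrow> nat) \<Rightarrow> relt \<Rightarrow> relt" where
  "relabel f a = (\<lambda>(I, K). (f ` I, f ` K)) ` a"

definition BJ :: "nat set \<Rightarrow> relt set" where
  "BJ J = relabel (phi J) ` Bn (card J)"

definition WJ :: "nat set \<Rightarrow> relt set" where
  "WJ J = {a. a \<subseteq> {(I, J - I) | I. I \<subseteq> J}}"

end

theory Submission
  imports Defs
begin

text \<open>The homology is computed one tensor factor at a time. Writing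
  \<open>W\<^bsub>[n+1]\<^esub> = W\<^bsub>[n]\<^esub> x\<^sub>n\<^sub>+\<^sub>1 \<oplus> W\<^bsub>[n]\<^esub> t\<^sub>n\<^sub>+\<^sub>1\<close>,
  the Cartan formula gives \<open>Q\<^sub>1(a x + b t) = Q\<^sub>1a x + (a + Q\<^sub>1b) t\<close> and
  \<open>P(a x + b t) = Pa x + (Q\<^sub>1a + Pb) t\<close>. By induction on \<open>n\<close> this yields
  \<open>Q\<^sub>1Q\<^sub>1 = 0\<close>, \<open>PQ\<^sub>1 = Q\<^sub>1P\<close>, \<open>PP = 0\<close> and the commutation rules of
  \<open>Q\<^sub>1\<close>, \<open>P\<close> with their conjugates \<open>Q\<^sub>1\<^sup>e\<close>, \<open>P\<^sup>e\<close> under the exchange.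

  By induction on \<open>t\<close>, \<open>\<B>\<^bsub>[2t]\<^esub>\<close> is an \<open>e\<close>-stable basis of the \<open>P\<close>-homology of
  \<open>W\<^bsub>[2t]\<^esub>\<close> consisting of cycles \<open>w\<close> with \<open>P(w\<^sup>e) = 0\<close> and
  \<open>w\<^sup>e = w + Q\<^sub>1\<^sup>eQ\<^sub>1w\<close>. From such a basis \<open>B\<close> the elements \<open>Q\<^sub>1(b x)\<close>
  and their exchanges give a basis for \<open>W\<^bsub>[2t+1]\<^esub>\<close>, and \<open>Q\<^sub>1(b x) x'\<close>,
  \<open>Q\<^sub>1(b x)\<^sup>e t'\<close> one for \<open>W\<^bsub>[2t+2]\<^esub>\<close>: writing a cycle or boundary of the larger
  module through its components in \<open>W\<^bsub>[2t]\<^esub>\<close> turns the cycle condition into linear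
  equations there, which are solved with the basis property of \<open>B\<close> and the operator
  identities. The order-preserving relabelling \<open>[n] \<rightarrow> J\<close> transports the result to
  \<open>W\<^sub>J\<close>.\<close>

section \<open>Arithmetic over \<open>F\<^sub>2\<close>\<close>

lemma radd_commute: "radd a b = radd b a"
  unfolding radd_def by blast

lemma radd_assoc: "radd (radd a b) c = radd a (radd b c)"
  unfolding radd_def by blast

lemma radd_left_commute: "radd a (radd b c) = radd b (radd a c)"
  unfolding radd_def by blast

lemmas radd_ac = radd_assoc radd_commute radd_left_commute

lemma radd_self [simp]: "radd a a = {}"
  unfolding radd_def by blast

lemma radd_cancel_left [simp]: "radd a (radd a b) = b"
  unfolding radd_def by blast

lemma radd_empty_right [simp]: "radd a {} = a"
  unfolding radd_def by blast

lemma radd_empty_left [simp]: "radd {} a = a"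
  unfolding radd_def by blast

lemma radd_eq_iff: "radd a b = c \<longleftrightarrow> b = radd a c"
  unfolding radd_def by blast

lemma radd_eq_empty_iff: "radd a b = {} \<longleftrightarrow> a = b"
  unfolding radd_def by blast

lemma image_radd: "inj_on \<phi> (a \<union> b) \<Longrightarrow> \<phi> ` radd a b = radd (\<phi> ` a) (\<phi> ` b)"
  unfolding radd_def by (auto dest: inj_onD)

abbreviation ssum :: "relt set \<Rightarrow> relt" where
  "ssum S \<equiv> sumF (\<lambda>b. b) S"

lemma mem_sumF_iff: "m \<in> sumF f A \<longleftrightarrow> odd (card {a \<in> A. m \<in> f a})"
  by (simp add: sumF_def)

lemma sumF_empty [simp]: "sumF f {} = {}"
  unfolding sumF_def by simp

lemma sumF_insert:
  assumes "finite A" "x \<notin> A"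
  shows "sumF f (insert x A) = radd (f x) (sumF f A)"
proof (rule set_eqI)
  fix m
  have "{a \<in> insert x A. m \<in> f a} =
      (if m \<in> f x then insert x {a \<in> A. m \<in> f a} else {a \<in> A. m \<in> f a})"
    by auto
  then show "m \<in> sumF f (insert x A) \<longleftrightarrow> m \<in> radd (f x) (sumF f A)"
    using assms unfolding sumF_def radd_def by (auto simp: card_insert_if)
qed

lemma sumF_singleton [simp]: "sumF f {x} = f x"
  using sumF_insert[of "{}" x f] by simp

lemma sumF_cong: "(\<And>x. x \<in> A \<Longrightarrow> f x = g x) \<Longrightarrow> sumF f A = sumF g A"
  unfolding sumF_def by (simp cong: conj_cong)

lemma sumF_subset_UN: "sumF f A \<subseteq> \<Union> (f ` A)"
proof
  fix m assume "m \<in> sumF f A"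
  then have "{a \<in> A. m \<in> f a} \<noteq> {}" by (intro notI) (simp add: mem_sumF_iff)
  then show "m \<in> \<Union> (f ` A)" by blast
qed

lemma sumF_Un_disjoint:
  assumes "finite A" "finite B" "A \<inter> B = {}"
  shows "sumF f (A \<union> B) = radd (sumF f A) (sumF f B)"
  using assms
proof (induction A rule: finite_induct)
  case (insert x F)
  then have "sumF f (insert x F \<union> B) = radd (f x) (sumF f (F \<union> B))"
    by (simp add: sumF_insert)
  with insert show ?case by (simp add: sumF_insert radd_assoc)
qed simp

lemma sumF_reindex: "inj_on h A \<Longrightarrow> sumF f (h ` A) = sumF (\<lambda>x. f (h x)) A"
proof -
  assume inj: "inj_on h A"
  have "\<And>m. {a \<in> h ` A. m \<in> f a} = h ` {a \<in> A. m \<in> f (h a)}" by auto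
  moreover have "\<And>m. card (h ` {a \<in> A. m \<in> f (h a)}) = card {a \<in> A. m \<in> f (h a)}"
    by (rule card_image, rule inj_on_subset[OF inj]) auto
  ultimately show ?thesis unfolding sumF_def by simp
qed

lemma sumF_radd_distrib:
  "finite A \<Longrightarrow> sumF (\<lambda>x. radd (f x) (g x)) A = radd (sumF f A) (sumF g A)"
  by (induction A rule: finite_induct) (simp_all add: sumF_insert radd_ac)

lemma sumF_radd_set:
  assumes "finite a" "finite b"
  shows "sumF g (radd a b) = radd (sumF g a) (sumF g b)"
proof -
  have split: "sumF g (X \<union> (a \<inter> b)) = radd (sumF g X) (sumF g (a \<inter> b))"
    if "X \<inter> (a \<inter> b) = {}" "finite X" for X
    using that assms by (intro sumF_Un_disjoint) auto
  have "(a - b) \<union> (a \<inter> b) = a" "(b - a) \<union> (a \<inter> b) = b" by blast+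
  then have "sumF g a = radd (sumF g (a - b)) (sumF g (a \<inter> b))"
    and "sumF g b = radd (sumF g (b - a)) (sumF g (a \<inter> b))"
    using split[of "a - b"] split[of "b - a"] assms by auto
  moreover have "sumF g (radd a b) = radd (sumF g (a - b)) (sumF g (b - a))"
    unfolding radd_def[of a b] using assms by (intro sumF_Un_disjoint) auto
  ultimately show ?thesis by (simp add: radd_ac)
qed

lemma sumF_image_commute:
  assumes "\<And>x. x \<in> A \<Longrightarrow> f x \<subseteq> D" "inj_on \<phi> D"
  shows "sumF (\<lambda>x. \<phi> ` f x) A = \<phi> ` sumF f A"
proof (rule set_eqI)
  fix m
  show "m \<in> sumF (\<lambda>x. \<phi> ` f x) A \<longleftrightarrow> m \<in> \<phi> ` sumF f A"
  proof (cases "m \<in> \<phi> ` D")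
    case True
    then obtain m0 where m0: "m0 \<in> D" "m = \<phi> m0" by auto
    have "{a \<in> A. m \<in> \<phi> ` f a} = {a \<in> A. m0 \<in> f a}"
      using assms m0 by (auto dest: inj_onD)
    moreover have "m \<in> \<phi> ` sumF f A \<longleftrightarrow> m0 \<in> sumF f A"
      using sumF_subset_UN[of f A] assms m0 by (auto dest: inj_onD)
    ultimately show ?thesis unfolding sumF_def by simp
  next
    case False
    then have "{a \<in> A. m \<in> \<phi> ` f a} = {}" using assms by auto
    moreover have "m \<notin> \<phi> ` sumF f A" using False sumF_subset_UN[of f A] assms by auto
    ultimately show ?thesis by (simp only: mem_sumF_iff card.empty) simp
  qed
qed

lemma sumF_singletons:
  assumes "inj_on \<phi> A"
  shows "sumF (\<lambda>x. {\<phi> x}) A = \<phi> ` A"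
proof -
  have "card {a \<in> A. m \<in> {\<phi> a}} = (if m \<in> \<phi> ` A then 1 else 0)" for m
  proof (cases "m \<in> \<phi> ` A")
    case True
    then obtain a where "a \<in> A" "m = \<phi> a" by auto
    then have "{a \<in> A. m \<in> {\<phi> a}} = {a}" using assms by (auto dest: inj_onD)
    then show ?thesis using True by simp
  next
    case False
    then have "{a \<in> A. m \<in> {\<phi> a}} = {}" by auto
    then show ?thesis using False by (simp only: card.empty) simp
  qed
  then show ?thesis unfolding sumF_def by auto
qed

section \<open>The modules \<open>W\<^bsub>[n]\<^esub>\<close> and the operators \<open>Q\<^sub>1\<close>, \<open>P\<close>, exchange\<close>

definition monomials :: "nat \<Rightarrow> mono set" where
  "monomials n = {(I, {1..n} - I) | I. I \<subseteq> {1..n}}"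

definition Wn :: "nat \<Rightarrow> relt set" where
  "Wn n = WJ {1..n}"

lemma mem_Wn_iff: "a \<in> Wn n \<longleftrightarrow> a \<subseteq> monomials n"
  unfolding Wn_def WJ_def monomials_def by (rule mem_Collect_eq)

lemma mem_monomials_iff: "m \<in> monomials n \<longleftrightarrow> fst m \<subseteq> {1..n} \<and> snd m = {1..n} - fst m"
  unfolding monomials_def by (cases m) auto

lemma finite_monomials: "finite (monomials n)"
proof -
  have "monomials n = (\<lambda>I. (I, {1..n} - I)) ` Pow {1..n}" unfolding monomials_def by auto
  then show ?thesis by simp
qed

lemma Wn_finite: "a \<in> Wn n \<Longrightarrow> finite a"
  unfolding mem_Wn_iff using finite_monomials by (rule finite_subset[rotated])

lemma mmul_left_t: "mmul (K, {}) (I, J) = (if K \<inter> I = {} then {(K \<union> I, J)} else {})"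
  unfolding mmul_def by simp

lemma Q1m_subset:
  "Q1m m \<subseteq> {(insert j (fst m), snd m - {j}) | j. j \<in> snd m \<and> j \<notin> fst m}"
  using sumF_subset_UN[of "\<lambda>j. mmul ({j}, {}) (fst m, snd m - {j})" "snd m"]
  unfolding Q1m_def by (auto simp: mmul_left_t split: if_splits)

lemma Pm_subset:
  "Pm m \<subseteq> {(K \<union> fst m, snd m - K) | K. K \<subseteq> snd m \<and> K \<inter> fst m = {}}"
  using sumF_subset_UN[of "\<lambda>K. mmul (K, {}) (fst m, snd m - K)" "{K. K \<subseteq> snd m \<and> card K = 2}"]
  unfolding Pm_def by (auto simp: mmul_left_t split: if_splits)

lemma Q1m_monomials:
  assumes "m \<in> monomials n"
  shows "Q1m m \<subseteq> monomials n"
proof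
  fix m' assume "m' \<in> Q1m m"
  then obtain j where "j \<in> snd m" "m' = (insert j (fst m), snd m - {j})"
    using Q1m_subset[of m] by blast
  with assms show "m' \<in> monomials n" unfolding mem_monomials_iff by auto
qed

lemma Pm_monomials:
  assumes "m \<in> monomials n"
  shows "Pm m \<subseteq> monomials n"
proof
  fix m' assume "m' \<in> Pm m"
  then obtain K where "K \<subseteq> snd m" "m' = (K \<union> fst m, snd m - K)"
    using Pm_subset[of m] by blast
  with assms show "m' \<in> monomials n" unfolding mem_monomials_iff by auto
qed

lemma Q1_Wn [simp]: "a \<in> Wn n \<Longrightarrow> Q1 a \<in> Wn n"
  unfolding Q1_def mem_Wn_iff using sumF_subset_UN[of Q1m a] Q1m_monomials by blast

lemma Pop_Wn [simp]: "a \<in> Wn n \<Longrightarrow> Pop a \<in> Wn n"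
  unfolding Pop_def mem_Wn_iff using sumF_subset_UN[of Pm a] Pm_monomials by blast

lemma exch_Wn [simp]: "a \<in> Wn n \<Longrightarrow> exch a \<in> Wn n"
  unfolding mem_Wn_iff exch_def by (fastforce simp: mem_monomials_iff)

lemma radd_Wn [simp]: "a \<in> Wn n \<Longrightarrow> b \<in> Wn n \<Longrightarrow> radd a b \<in> Wn n"
  unfolding mem_Wn_iff radd_def by blast

lemma empty_Wn [simp]: "{} \<in> Wn n"
  unfolding mem_Wn_iff by simp

lemma sumF_Wn: "(\<And>x. x \<in> S \<Longrightarrow> f x \<in> Wn n) \<Longrightarrow> sumF f S \<in> Wn n"
  unfolding mem_Wn_iff using sumF_subset_UN[of f S] by blast

lemma ssum_Wn: "S \<subseteq> Wn n \<Longrightarrow> ssum S \<in> Wn n"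
  by (rule sumF_Wn) auto

lemma Q1_empty [simp]: "Q1 {} = {}"
  unfolding Q1_def by simp

lemma Pop_empty [simp]: "Pop {} = {}"
  unfolding Pop_def by simp

lemma exch_empty [simp]: "exch {} = {}"
  unfolding exch_def by simp

lemma exch_exch [simp]: "exch (exch a) = a"
  unfolding exch_def image_image by (simp add: case_prod_beta)

lemma exch_eq_iff: "exch a = exch b \<longleftrightarrow> a = b"
  by (metis exch_exch)

lemma exch_radd: "exch (radd a b) = radd (exch a) (exch b)"
  unfolding exch_def by (rule image_radd) (auto simp: inj_on_def)

lemma Q1_radd: "a \<in> Wn n \<Longrightarrow> b \<in> Wn n \<Longrightarrow> Q1 (radd a b) = radd (Q1 a) (Q1 b)"
  unfolding Q1_def by (simp add: sumF_radd_set Wn_finite)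

lemma Pop_radd: "a \<in> Wn n \<Longrightarrow> b \<in> Wn n \<Longrightarrow> Pop (radd a b) = radd (Pop a) (Pop b)"
  unfolding Pop_def by (simp add: sumF_radd_set Wn_finite)

definition Wn_additive :: "nat \<Rightarrow> (relt \<Rightarrow> relt) \<Rightarrow> bool" where
  "Wn_additive n L \<longleftrightarrow> L {} = {} \<and> (\<forall>x\<in>Wn n. \<forall>y\<in>Wn n. L (radd x y) = radd (L x) (L y))"

lemma sumF_additive:
  assumes "Wn_additive n L" "finite S" "S \<subseteq> Wn n"
  shows "sumF L S = L (ssum S)"
  using assms(2,3)
proof (induction S rule: finite_induct)
  case (insert x F)
  then have "ssum F \<in> Wn n" by (auto intro: ssum_Wn)
  with insert assms(1) show ?case by (simp add: sumF_insert Wn_additive_def)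
qed (use assms(1) in \<open>simp add: Wn_additive_def\<close>)

lemma Wn_additive_exch: "Wn_additive n exch"
  by (simp add: Wn_additive_def exch_radd)

lemma ssum_image_exch: "finite S \<Longrightarrow> S \<subseteq> Wn n \<Longrightarrow> ssum (exch ` S) = exch (ssum S)"
  by (simp add: sumF_reindex inj_on_def exch_eq_iff sumF_additive[OF Wn_additive_exch])

definition mono_x :: "nat \<Rightarrow> mono \<Rightarrow> mono" where
  "mono_x k m = (fst m, insert k (snd m))"

definition mono_t :: "nat \<Rightarrow> mono \<Rightarrow> mono" where
  "mono_t k m = (insert k (fst m), snd m)"

definition avoids :: "nat \<Rightarrow> relt \<Rightarrow> bool" where
  "avoids k a \<longleftrightarrow> (\<forall>m\<in>a. k \<notin> fst m \<and> k \<notin> snd m \<and> finite (snd m))"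

lemma inj_on_mono_x: "inj_on (mono_x k) {m. k \<notin> snd m}"
  unfolding mono_x_def inj_on_def by (auto simp: prod_eq_iff)

lemma inj_on_mono_t: "inj_on (mono_t k) {m. k \<notin> fst m}"
  unfolding mono_t_def inj_on_def by (auto simp: prod_eq_iff)

lemma mmul_left_t_insert_x:
  "k \<notin> K \<Longrightarrow> mmul (K, {}) (I, insert k J) = mono_x k ` mmul (K, {}) (I, J)"
  by (simp add: mmul_left_t mono_x_def)

lemma mmul_left_t_insert_t:
  "k \<notin> K \<Longrightarrow> mmul (K, {}) (insert k I, J) = mono_t k ` mmul (K, {}) (I, J)"
  by (auto simp: mmul_left_t mono_t_def)

lemma Q1m_mono_x:
  assumes "finite J" "k \<notin> I" "k \<notin> J"
  shows "Q1m (mono_x k (I, J)) = radd (mono_x k ` Q1m (I, J)) {mono_t k (I, J)}"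
proof -
  let ?f = "\<lambda>j. mmul ({j}, {}) (I, insert k J - {j})"
  have "Q1m (mono_x k (I, J)) = radd (?f k) (sumF ?f J)"
    using assms by (simp add: Q1m_def mono_x_def sumF_insert)
  also have "?f k = {mono_t k (I, J)}"
    using assms by (simp add: mmul_left_t mono_t_def)
  also have "sumF ?f J = sumF (\<lambda>j. mono_x k ` mmul ({j}, {}) (I, J - {j})) J"
  proof (rule sumF_cong)
    fix j assume "j \<in> J"
    then have "insert k J - {j} = insert k (J - {j})" "k \<notin> {j}" using assms by auto
    then show "?f j = mono_x k ` mmul ({j}, {}) (I, J - {j})"
      by (simp add: mmul_left_t_insert_x)
  qed
  also have "\<dots> = mono_x k ` Q1m (I, J)"
    unfolding Q1m_def using assms
    by (simp, intro sumF_image_commute[OF _ inj_on_mono_x]) (auto simp: mmul_left_t)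
  finally show ?thesis by (simp add: radd_commute)
qed

lemma Q1m_mono_t:
  assumes "k \<notin> I" "k \<notin> J"
  shows "Q1m (mono_t k (I, J)) = mono_t k ` Q1m (I, J)"
proof -
  have "Q1m (mono_t k (I, J)) = sumF (\<lambda>j. mmul ({j}, {}) (insert k I, J - {j})) J"
    by (simp add: Q1m_def mono_t_def)
  also have "\<dots> = sumF (\<lambda>j. mono_t k ` mmul ({j}, {}) (I, J - {j})) J"
    using assms by (intro sumF_cong mmul_left_t_insert_t) auto
  also have "\<dots> = mono_t k ` Q1m (I, J)"
    unfolding Q1m_def using assms
    by (simp, intro sumF_image_commute[OF _ inj_on_mono_t]) (auto simp: mmul_left_t)
  finally show ?thesis .
qed

lemma Pm_mono_t:
  assumes "k \<notin> I" "k \<notin> J"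
  shows "Pm (mono_t k (I, J)) = mono_t k ` Pm (I, J)"
proof -
  have "Pm (mono_t k (I, J)) =
      sumF (\<lambda>K. mmul (K, {}) (insert k I, J - K)) {K. K \<subseteq> J \<and> card K = 2}"
    by (simp add: Pm_def mono_t_def)
  also have "\<dots> = sumF (\<lambda>K. mono_t k ` mmul (K, {}) (I, J - K)) {K. K \<subseteq> J \<and> card K = 2}"
    using assms by (intro sumF_cong mmul_left_t_insert_t) auto
  also have "\<dots> = mono_t k ` Pm (I, J)"
    unfolding Pm_def using assms
    by (simp, intro sumF_image_commute[OF _ inj_on_mono_t]) (auto simp: mmul_left_t)
  finally show ?thesis .
qed

lemma card2_subsets_insert:
  assumes "k \<notin> J"
  shows "{K. K \<subseteq> insert k J \<and> card K = 2} = {K. K \<subseteq> J \<and> card K = 2} \<union> (\<lambda>j. {k, j}) ` J"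
proof (rule set_eqI, rule iffI)
  fix K assume "K \<in> {K. K \<subseteq> insert k J \<and> card K = 2}"
  then have K: "K \<subseteq> insert k J" "card K = 2" by auto
  then obtain x y where xy: "x \<noteq> y" "K = {x, y}" by (meson card_2_iff)
  show "K \<in> {K. K \<subseteq> J \<and> card K = 2} \<union> (\<lambda>j. {k, j}) ` J"
  proof (cases "k \<in> K")
    case True
    then have "x = k \<or> y = k" using xy by auto
    then show ?thesis using xy K by (auto simp: insert_commute)
  next
    case False
    then show ?thesis using K by auto
  qed
next
  fix K assume "K \<in> {K. K \<subseteq> J \<and> card K = 2} \<union> (\<lambda>j. {k, j}) ` J"
  then show "K \<in> {K. K \<subseteq> insert k J \<and> card K = 2}" using assms by (auto simp: card_insert_if)
qed

lemma Pm_mono_x: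
  assumes "finite J" "k \<notin> I" "k \<notin> J"
  shows "Pm (mono_x k (I, J)) = radd (mono_x k ` Pm (I, J)) (mono_t k ` Q1m (I, J))"
proof -
  define A where "A = {K. K \<subseteq> J \<and> card K = 2}"
  let ?f = "\<lambda>K. mmul (K, {}) (I, insert k J - K)"
  have "finite A" unfolding A_def using assms(1) by simp
  moreover have "A \<inter> (\<lambda>j. {k, j}) ` J = {}" "inj_on (\<lambda>j. {k, j}) J"
    unfolding A_def using assms by (auto simp: inj_on_def doubleton_eq_iff)
  ultimately have "Pm (mono_x k (I, J)) = radd (sumF ?f A) (sumF (\<lambda>j. ?f {k, j}) J)"
    using assms(1) by (simp add: Pm_def mono_x_def card2_subsets_insert[OF assms(3)]
        A_def[symmetric] sumF_Un_disjoint sumF_reindex)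
  also have "sumF ?f A = sumF (\<lambda>K. mono_x k ` mmul (K, {}) (I, J - K)) A"
  proof (rule sumF_cong)
    fix K assume "K \<in> A"
    then have "k \<notin> K" "insert k J - K = insert k (J - K)" using assms by (auto simp: A_def)
    then show "?f K = mono_x k ` mmul (K, {}) (I, J - K)" by (simp add: mmul_left_t_insert_x)
  qed
  also have "\<dots> = mono_x k ` Pm (I, J)"
    unfolding Pm_def A_def using assms
    by (simp, intro sumF_image_commute[OF _ inj_on_mono_x]) (auto simp: mmul_left_t)
  also have "sumF (\<lambda>j. ?f {k, j}) J = sumF (\<lambda>j. mono_t k ` mmul ({j}, {}) (I, J - {j})) J"
  proof (rule sumF_cong)
    fix j assume "j \<in> J"
    then have "insert k J - {k, j} = J - {j}" "k \<noteq> j" using assms by auto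
    then show "?f {k, j} = mono_t k ` mmul ({j}, {}) (I, J - {j})"
      using assms by (auto simp: mmul_left_t mono_t_def)
  qed
  also have "\<dots> = mono_t k ` Q1m (I, J)"
    unfolding Q1m_def using assms
    by (simp, intro sumF_image_commute[OF _ inj_on_mono_t]) (auto simp: mmul_left_t)
  finally show ?thesis .
qed

text \<open>Multiplication by \<open>x\<^sub>k\<close>, \<open>t\<^sub>k\<close> realises \<open>W \<otimes> M\<^sub>k\<close>; the formulas below are
  \<open>\<Delta>(Q\<^sub>1) = Q\<^sub>1 \<otimes> 1 + 1 \<otimes> Q\<^sub>1\<close> and \<open>\<Delta>(P) = P \<otimes> 1 + Q\<^sub>1 \<otimes> Q\<^sub>1 + 1 \<otimes> P\<close>.\<close>

lemma Q1_image_mono_x: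
  assumes "finite a" "avoids k a"
  shows "Q1 (mono_x k ` a) = radd (mono_x k ` Q1 a) (mono_t k ` a)"
proof -
  have "inj_on (mono_x k) a" "inj_on (mono_t k) a"
    using assms(2) by (auto simp: avoids_def intro: inj_on_subset[OF inj_on_mono_x]
        inj_on_subset[OF inj_on_mono_t])
  then have "Q1 (mono_x k ` a) = sumF (\<lambda>m. radd (mono_x k ` Q1m m) {mono_t k m}) a"
    unfolding Q1_def using assms(2)
    by (simp add: sumF_reindex, intro sumF_cong) (auto simp: avoids_def Q1m_mono_x)
  also have "\<dots> = radd (sumF (\<lambda>m. mono_x k ` Q1m m) a) (sumF (\<lambda>m. {mono_t k m}) a)"
    using assms(1) by (rule sumF_radd_distrib)
  also have "sumF (\<lambda>m. mono_x k ` Q1m m) a = mono_x k ` Q1 a"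
    unfolding Q1_def using assms(2) Q1m_subset
    by (intro sumF_image_commute[OF _ inj_on_mono_x]) (fastforce simp: avoids_def)
  also have "sumF (\<lambda>m. {mono_t k m}) a = mono_t k ` a"
    using \<open>inj_on (mono_t k) a\<close> by (rule sumF_singletons)
  finally show ?thesis .
qed

lemma Q1_image_mono_t:
  assumes "avoids k a"
  shows "Q1 (mono_t k ` a) = mono_t k ` Q1 a"
proof -
  have "inj_on (mono_t k) a"
    using assms by (auto simp: avoids_def intro: inj_on_subset[OF inj_on_mono_t])
  then have "Q1 (mono_t k ` a) = sumF (\<lambda>m. mono_t k ` Q1m m) a"
    unfolding Q1_def using assms
    by (simp add: sumF_reindex, intro sumF_cong) (auto simp: avoids_def Q1m_mono_t)
  also have "\<dots> = mono_t k ` Q1 a"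
    unfolding Q1_def using assms Q1m_subset
    by (intro sumF_image_commute[OF _ inj_on_mono_t]) (fastforce simp: avoids_def)
  finally show ?thesis .
qed

lemma Pop_image_mono_x:
  assumes "finite a" "avoids k a"
  shows "Pop (mono_x k ` a) = radd (mono_x k ` Pop a) (mono_t k ` Q1 a)"
proof -
  have "inj_on (mono_x k) a"
    using assms(2) by (auto simp: avoids_def intro: inj_on_subset[OF inj_on_mono_x])
  then have "Pop (mono_x k ` a) = sumF (\<lambda>m. radd (mono_x k ` Pm m) (mono_t k ` Q1m m)) a"
    unfolding Pop_def using assms(2)
    by (simp add: sumF_reindex, intro sumF_cong) (auto simp: avoids_def Pm_mono_x)
  also have "\<dots> = radd (mono_x k ` Pop a) (mono_t k ` Q1 a)"
    unfolding Pop_def Q1_def using assms Pm_subset Q1m_subset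
    by (simp add: sumF_radd_distrib, intro arg_cong2[where f=radd]
        sumF_image_commute[OF _ inj_on_mono_x] sumF_image_commute[OF _ inj_on_mono_t])
      (fastforce simp: avoids_def)+
  finally show ?thesis .
qed

lemma Pop_image_mono_t:
  assumes "avoids k a"
  shows "Pop (mono_t k ` a) = mono_t k ` Pop a"
proof -
  have "inj_on (mono_t k) a"
    using assms by (auto simp: avoids_def intro: inj_on_subset[OF inj_on_mono_t])
  then have "Pop (mono_t k ` a) = sumF (\<lambda>m. mono_t k ` Pm m) a"
    unfolding Pop_def using assms
    by (simp add: sumF_reindex, intro sumF_cong) (auto simp: avoids_def Pm_mono_t)
  also have "\<dots> = mono_t k ` Pop a"
    unfolding Pop_def using assms Pm_subset
    by (intro sumF_image_commute[OF _ inj_on_mono_t]) (fastforce simp: avoids_def)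
  finally show ?thesis .
qed

lemma exch_image_mono_x: "exch (mono_x k ` a) = mono_t k ` exch a"
  unfolding exch_def image_image by (rule image_cong) (auto simp: mono_x_def mono_t_def)

lemma exch_image_mono_t: "exch (mono_t k ` a) = mono_x k ` exch a"
  unfolding exch_def image_image by (rule image_cong) (auto simp: mono_x_def mono_t_def)

section \<open>The splitting \<open>W\<^bsub>[n+1]\<^esub> = W\<^bsub>[n]\<^esub> x\<^sub>n\<^sub>+\<^sub>1 \<oplus> W\<^bsub>[n]\<^esub> t\<^sub>n\<^sub>+\<^sub>1\<close>\<close>

definition adjoin :: "nat \<Rightarrow> relt \<Rightarrow> relt \<Rightarrow> relt" where
  "adjoin n a b = radd (mono_x (Suc n) ` a) (mono_t (Suc n) ` b)"

lemma monomials_avoid_Suc: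
  "m \<in> monomials n \<Longrightarrow> Suc n \<notin> fst m \<and> Suc n \<notin> snd m \<and> finite (snd m)"
  by (auto simp: mem_monomials_iff)

lemma avoids_Suc_Wn: "a \<in> Wn n \<Longrightarrow> avoids (Suc n) a"
  unfolding avoids_def mem_Wn_iff using monomials_avoid_Suc by blast

lemma inj_on_mono_x_monomials: "inj_on (mono_x (Suc n)) (monomials n)"
  by (rule inj_on_subset[OF inj_on_mono_x]) (auto dest: monomials_avoid_Suc)

lemma inj_on_mono_t_monomials: "inj_on (mono_t (Suc n)) (monomials n)"
  by (rule inj_on_subset[OF inj_on_mono_t]) (auto dest: monomials_avoid_Suc)

lemma image_mono_x_radd:
  "a \<in> Wn n \<Longrightarrow> b \<in> Wn n \<Longrightarrow>
    mono_x (Suc n) ` radd a b = radd (mono_x (Suc n) ` a) (mono_x (Suc n) ` b)"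
  by (rule image_radd, rule inj_on_subset[OF inj_on_mono_x_monomials]) (auto simp: mem_Wn_iff)

lemma image_mono_t_radd:
  "a \<in> Wn n \<Longrightarrow> b \<in> Wn n \<Longrightarrow>
    mono_t (Suc n) ` radd a b = radd (mono_t (Suc n) ` a) (mono_t (Suc n) ` b)"
  by (rule image_radd, rule inj_on_subset[OF inj_on_mono_t_monomials]) (auto simp: mem_Wn_iff)

lemma adjoin_radd:
  "a \<in> Wn n \<Longrightarrow> b \<in> Wn n \<Longrightarrow> c \<in> Wn n \<Longrightarrow> d \<in> Wn n \<Longrightarrow>
    radd (adjoin n a b) (adjoin n c d) = adjoin n (radd a c) (radd b d)"
  unfolding adjoin_def by (simp add: image_mono_x_radd image_mono_t_radd radd_ac)

lemma adjoin_empty [simp]: "adjoin n {} {} = {}"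
  unfolding adjoin_def by simp

lemma mono_x_monomials: "m \<in> monomials n \<Longrightarrow> mono_x (Suc n) m \<in> monomials (Suc n)"
  by (auto simp: mem_monomials_iff mono_x_def)

lemma mono_t_monomials: "m \<in> monomials n \<Longrightarrow> mono_t (Suc n) m \<in> monomials (Suc n)"
  by (auto simp: mem_monomials_iff mono_t_def)

lemma image_mono_x_Wn: "a \<in> Wn n \<Longrightarrow> mono_x (Suc n) ` a \<in> Wn (Suc n)"
  by (auto simp: mem_Wn_iff intro!: mono_x_monomials)

lemma image_mono_t_Wn: "a \<in> Wn n \<Longrightarrow> mono_t (Suc n) ` a \<in> Wn (Suc n)"
  by (auto simp: mem_Wn_iff intro!: mono_t_monomials)

lemma adjoin_Wn [simp]: "a \<in> Wn n \<Longrightarrow> b \<in> Wn n \<Longrightarrow> adjoin n a b \<in> Wn (Suc n)"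
  unfolding adjoin_def by (intro radd_Wn image_mono_x_Wn image_mono_t_Wn)

lemma mono_x_mem_adjoin_iff:
  assumes "a \<in> Wn n" "m \<in> monomials n"
  shows "mono_x (Suc n) m \<in> adjoin n a b \<longleftrightarrow> m \<in> a"
proof -
  have "mono_x (Suc n) m \<notin> mono_t (Suc n) ` b"
    using monomials_avoid_Suc[OF assms(2)] by (auto simp: mono_x_def mono_t_def)
  moreover have "mono_x (Suc n) m \<in> mono_x (Suc n) ` a \<longleftrightarrow> m \<in> a"
    using inj_on_image_mem_iff[OF inj_on_mono_x_monomials] assms by (auto simp: mem_Wn_iff)
  ultimately show ?thesis unfolding adjoin_def radd_def by blast
qed

lemma mono_t_mem_adjoin_iff:
  assumes "a \<in> Wn n" "b \<in> Wn n" "m \<in> monomials n"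
  shows "mono_t (Suc n) m \<in> adjoin n a b \<longleftrightarrow> m \<in> b"
proof -
  have "mono_t (Suc n) m \<notin> mono_x (Suc n) ` a"
    using assms(1) monomials_avoid_Suc by (fastforce simp: mem_Wn_iff mono_x_def mono_t_def)
  moreover have "mono_t (Suc n) m \<in> mono_t (Suc n) ` b \<longleftrightarrow> m \<in> b"
    using inj_on_image_mem_iff[OF inj_on_mono_t_monomials] assms by (auto simp: mem_Wn_iff)
  ultimately show ?thesis unfolding adjoin_def radd_def by blast
qed

lemma adjoin_eq_iff:
  assumes "a \<in> Wn n" "b \<in> Wn n" "c \<in> Wn n" "d \<in> Wn n"
  shows "adjoin n a b = adjoin n c d \<longleftrightarrow> a = c \<and> b = d"
proof
  assume eq: "adjoin n a b = adjoin n c d"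
  have "m \<in> a \<longleftrightarrow> m \<in> c" "m \<in> b \<longleftrightarrow> m \<in> d" if "m \<in> monomials n" for m
    using mono_x_mem_adjoin_iff[OF _ that] mono_t_mem_adjoin_iff[OF _ _ that] assms eq by metis+
  then show "a = c \<and> b = d" using assms unfolding mem_Wn_iff by blast
qed simp

lemma adjoin_eq_empty_iff:
  "a \<in> Wn n \<Longrightarrow> b \<in> Wn n \<Longrightarrow> adjoin n a b = {} \<longleftrightarrow> a = {} \<and> b = {}"
  using adjoin_eq_iff[of a n b "{}" "{}"] by simp

lemma monomials_Suc_cases:
  assumes "m \<in> monomials (Suc n)"
  obtains m0 where "m0 \<in> monomials n" "m = mono_x (Suc n) m0"
    | m0 where "m0 \<in> monomials n" "m = mono_t (Suc n) m0"
proof (cases "Suc n \<in> fst m")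
  case True
  then have "m = mono_t (Suc n) (fst m - {Suc n}, snd m)"
    by (simp add: mono_t_def insert_absorb)
  moreover have "(fst m - {Suc n}, snd m) \<in> monomials n"
    using assms True by (auto simp: mem_monomials_iff le_Suc_eq)
  ultimately show ?thesis using that(2) by blast
next
  case False
  then have "Suc n \<in> snd m" using assms by (simp add: mem_monomials_iff)
  then have "m = mono_x (Suc n) (fst m, snd m - {Suc n})"
    by (simp add: mono_x_def insert_absorb)
  moreover have "(fst m, snd m - {Suc n}) \<in> monomials n"
    using assms False by (auto simp: mem_monomials_iff le_Suc_eq)
  ultimately show ?thesis using that(1) by blast
qed

lemma Wn_Suc_adjoin:
  assumes "z \<in> Wn (Suc n)"
  obtains a b where "a \<in> Wn n" "b \<in> Wn n" "z = adjoin n a b"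
proof
  define a where "a = {m \<in> monomials n. mono_x (Suc n) m \<in> z}"
  define b where "b = {m \<in> monomials n. mono_t (Suc n) m \<in> z}"
  show W: "a \<in> Wn n" "b \<in> Wn n" unfolding a_def b_def mem_Wn_iff by auto
  show "z = adjoin n a b"
  proof (rule set_eqI)
    fix m
    show "m \<in> z \<longleftrightarrow> m \<in> adjoin n a b"
    proof (cases "m \<in> monomials (Suc n)")
      case True
      then show ?thesis
        by (cases rule: monomials_Suc_cases)
          (auto simp: mono_x_mem_adjoin_iff mono_t_mem_adjoin_iff W, auto simp: a_def b_def)
    next
      case False
      moreover have "adjoin n a b \<in> Wn (Suc n)" using W by simp
      ultimately show ?thesis using assms by (auto simp: mem_Wn_iff)
    qed
  qed
qed

lemma Q1_adjoin:
  assumes "a \<in> Wn n" "b \<in> Wn n"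
  shows "Q1 (adjoin n a b) = adjoin n (Q1 a) (radd a (Q1 b))"
proof -
  have "Q1 (adjoin n a b) = radd (Q1 (mono_x (Suc n) ` a)) (Q1 (mono_t (Suc n) ` b))"
    unfolding adjoin_def using assms
    by (intro Q1_radd[where n="Suc n"] image_mono_x_Wn image_mono_t_Wn)
  also have "\<dots> = radd (radd (mono_x (Suc n) ` Q1 a) (mono_t (Suc n) ` a)) (mono_t (Suc n) ` Q1 b)"
    using assms by (simp add: Q1_image_mono_x Q1_image_mono_t avoids_Suc_Wn Wn_finite)
  also have "\<dots> = adjoin n (Q1 a) (radd a (Q1 b))"
    unfolding adjoin_def using assms by (simp add: image_mono_t_radd radd_assoc)
  finally show ?thesis .
qed

lemma Pop_adjoin:
  assumes "a \<in> Wn n" "b \<in> Wn n"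
  shows "Pop (adjoin n a b) = adjoin n (Pop a) (radd (Q1 a) (Pop b))"
proof -
  have "Pop (adjoin n a b) = radd (Pop (mono_x (Suc n) ` a)) (Pop (mono_t (Suc n) ` b))"
    unfolding adjoin_def using assms
    by (intro Pop_radd[where n="Suc n"] image_mono_x_Wn image_mono_t_Wn)
  also have "\<dots> =
      radd (radd (mono_x (Suc n) ` Pop a) (mono_t (Suc n) ` Q1 a)) (mono_t (Suc n) ` Pop b)"
    using assms by (simp add: Pop_image_mono_x Pop_image_mono_t avoids_Suc_Wn Wn_finite)
  also have "\<dots> = adjoin n (Pop a) (radd (Q1 a) (Pop b))"
    unfolding adjoin_def using assms by (simp add: image_mono_t_radd radd_assoc)
  finally show ?thesis .
qed

lemma exch_adjoin: "exch (adjoin n a b) = adjoin n (exch b) (exch a)"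
  unfolding adjoin_def exch_radd exch_image_mono_x exch_image_mono_t by (rule radd_commute)

lemma rmul_singleton:
  assumes "\<And>p. p \<in> a \<Longrightarrow> mmul p q = {h p}" "inj_on h a"
  shows "rmul a {q} = h ` a"
proof -
  have "a \<times> {q} = (\<lambda>p. (p, q)) ` a" by auto
  then have "rmul a {q} = sumF (\<lambda>p. mmul p q) a"
    unfolding rmul_def by (simp add: sumF_reindex inj_on_def)
  also have "\<dots> = sumF (\<lambda>p. {h p}) a" using assms(1) by (rule sumF_cong)
  also have "\<dots> = h ` a" using assms(2) by (rule sumF_singletons)
  finally show ?thesis .
qed

lemma rmul_xv_Suc:
  assumes "a \<in> Wn n"
  shows "rmul a (xv (Suc n)) = adjoin n a {}"
proof -
  have "rmul a {({}, {Suc n})} = mono_x (Suc n) ` a"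
  proof (rule rmul_singleton)
    show "inj_on (mono_x (Suc n)) a"
      using assms by (intro inj_on_subset[OF inj_on_mono_x_monomials]) (simp add: mem_Wn_iff)
    fix p assume "p \<in> a"
    then have "Suc n \<notin> snd p" using assms monomials_avoid_Suc unfolding mem_Wn_iff by blast
    then show "mmul p ({}, {Suc n}) = {mono_x (Suc n) p}" by (simp add: mmul_def mono_x_def)
  qed
  then show ?thesis by (simp add: xv_def adjoin_def)
qed

lemma rmul_tv_Suc:
  assumes "a \<in> Wn n"
  shows "rmul a (tv (Suc n)) = adjoin n {} a"
proof -
  have "rmul a {({Suc n}, {})} = mono_t (Suc n) ` a"
  proof (rule rmul_singleton)
    show "inj_on (mono_t (Suc n)) a"
      using assms by (intro inj_on_subset[OF inj_on_mono_t_monomials]) (simp add: mem_Wn_iff)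
    fix p assume "p \<in> a"
    then have "Suc n \<notin> fst p" using assms monomials_avoid_Suc unfolding mem_Wn_iff by blast
    then show "mmul p ({Suc n}, {}) = {mono_t (Suc n) p}" by (simp add: mmul_def mono_t_def)
  qed
  then show ?thesis by (simp add: tv_def adjoin_def)
qed

section \<open>Operator identities on \<open>W\<^bsub>[n]\<^esub>\<close>\<close>

definition Q1_conj :: "relt \<Rightarrow> relt" where
  "Q1_conj z = exch (Q1 (exch z))"

definition P_conj :: "relt \<Rightarrow> relt" where
  "P_conj z = exch (Pop (exch z))"

lemma Q1_conj_Wn [simp]: "a \<in> Wn n \<Longrightarrow> Q1_conj a \<in> Wn n"
  by (simp add: Q1_conj_def)

lemma P_conj_Wn [simp]: "a \<in> Wn n \<Longrightarrow> P_conj a \<in> Wn n"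
  by (simp add: P_conj_def)

lemma Q1_conj_empty [simp]: "Q1_conj {} = {}"
  by (simp add: Q1_conj_def)

lemma Q1_conj_exch: "Q1_conj (exch x) = exch (Q1 x)"
  by (simp add: Q1_conj_def)

lemma Q1_conj_radd: "a \<in> Wn n \<Longrightarrow> b \<in> Wn n \<Longrightarrow> Q1_conj (radd a b) = radd (Q1_conj a) (Q1_conj b)"
  by (simp add: Q1_conj_def exch_radd Q1_radd[where n=n])

lemma P_conj_radd: "a \<in> Wn n \<Longrightarrow> b \<in> Wn n \<Longrightarrow> P_conj (radd a b) = radd (P_conj a) (P_conj b)"
  by (simp add: P_conj_def exch_radd Pop_radd[where n=n])

lemma Q1_conj_adjoin:
  "a \<in> Wn n \<Longrightarrow> b \<in> Wn n \<Longrightarrow> Q1_conj (adjoin n a b) = adjoin n (radd b (Q1_conj a)) (Q1_conj b)"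
  by (simp add: Q1_conj_def exch_adjoin Q1_adjoin exch_radd)

lemma P_conj_adjoin:
  "a \<in> Wn n \<Longrightarrow> b \<in> Wn n \<Longrightarrow>
    P_conj (adjoin n a b) = adjoin n (radd (P_conj a) (Q1_conj b)) (P_conj b)"
  by (simp add: P_conj_def Q1_conj_def exch_adjoin Pop_adjoin exch_radd radd_commute)

lemma Wn_0_cases: "z \<in> Wn 0 \<Longrightarrow> z = {} \<or> z = one"
  by (auto simp: mem_Wn_iff monomials_def one_def subset_singleton_iff)

lemma one_Wn: "one \<in> Wn 0"
  by (simp add: mem_Wn_iff monomials_def one_def)

lemma exch_one [simp]: "exch one = one"
  by (simp add: exch_def one_def)

lemma Q1_one [simp]: "Q1 one = {}"
  by (simp add: Q1_def Q1m_def one_def)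

lemma Pop_one [simp]: "Pop one = {}"
  by (simp add: Pop_def Pm_def one_def cong: conj_cong)

text \<open>On a single factor \<open>M\<^sub>j\<close> the anticommutator of \<open>Q\<^sub>1\<close> with its conjugate
  \<open>Q\<^sub>1\<^sup>e\<close> is the identity, so on \<open>W\<^bsub>[n]\<^esub>\<close> it is \<open>n\<close> times the identity;
  this is the origin of the parity conditions.\<close>

lemma Wn_operator_identities:
  "z \<in> Wn n \<Longrightarrow> Q1 (Q1 z) = {} \<and> Pop (Q1 z) = Q1 (Pop z) \<and> Pop (Pop z) = {}
     \<and> Q1_conj (Q1 z) = radd (Q1 (Q1_conj z)) (if odd n then z else {})
     \<and> P_conj (Q1 z) = radd (Q1 (P_conj z)) (if even n then Q1_conj z else {})"
proof (induction n arbitrary: z)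
  case 0
  then show ?case by (auto dest: Wn_0_cases simp: Q1_conj_def P_conj_def)
next
  case (Suc n)
  obtain a b where ab: "a \<in> Wn n" "b \<in> Wn n" "z = adjoin n a b"
    using Wn_Suc_adjoin[OF Suc.prems] .
  note IH = Suc.IH[OF ab(1)] Suc.IH[OF ab(2)]
  show ?case
    using ab IH by (simp add: Q1_adjoin Pop_adjoin Q1_conj_adjoin P_conj_adjoin adjoin_radd
        adjoin_eq_iff adjoin_eq_empty_iff radd_ac Q1_radd[where n=n] Pop_radd[where n=n]
        Q1_conj_radd[where n=n] P_conj_radd[where n=n])
qed

lemma Q1_Q1: "z \<in> Wn n \<Longrightarrow> Q1 (Q1 z) = {}"
  using Wn_operator_identities by blast

lemma Pop_Q1: "z \<in> Wn n \<Longrightarrow> Pop (Q1 z) = Q1 (Pop z)"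
  using Wn_operator_identities by blast

lemma Pop_Pop: "z \<in> Wn n \<Longrightarrow> Pop (Pop z) = {}"
  using Wn_operator_identities by blast

lemma Q1_conj_Q1: "z \<in> Wn n \<Longrightarrow> Q1_conj (Q1 z) = radd (Q1 (Q1_conj z)) (if odd n then z else {})"
  using Wn_operator_identities by blast

lemma P_conj_Q1:
  "z \<in> Wn n \<Longrightarrow> P_conj (Q1 z) = radd (Q1 (P_conj z)) (if even n then Q1_conj z else {})"
  using Wn_operator_identities by blast

lemma Q1_conj_Q1_conj: "x \<in> Wn n \<Longrightarrow> Q1_conj (Q1_conj x) = {}"
  by (simp add: Q1_conj_def Q1_Q1[where n=n])

lemma Q1_Q1_conj_even: "even n \<Longrightarrow> x \<in> Wn n \<Longrightarrow> Q1 (Q1_conj x) = Q1_conj (Q1 x)"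
  using Q1_conj_Q1[of x n] by simp

lemma Pop_Q1_conj_even:
  assumes "even n" "x \<in> Wn n"
  shows "Pop (Q1_conj x) = radd (Q1_conj (Pop x)) (Q1 x)"
proof -
  have "P_conj (Q1 (exch x)) = radd (Q1 (P_conj (exch x))) (Q1_conj (exch x))"
    using P_conj_Q1[of "exch x" n] assms by simp
  then have "exch (Pop (Q1_conj x)) = exch (radd (Q1_conj (Pop x)) (Q1 x))"
    by (simp add: P_conj_def Q1_conj_def exch_radd)
  then show ?thesis by (simp only: exch_eq_iff)
qed

definition exch_twisted :: "relt \<Rightarrow> bool" where
  "exch_twisted w \<longleftrightarrow> exch w = radd w (Q1_conj (Q1 w))"

lemma exch_twisted_exch:
  assumes "even n" "w \<in> Wn n" "exch_twisted w"
  shows "exch_twisted (exch w)"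
proof -
  have "Q1 (Q1_conj w) = Q1_conj (Q1 w)" using Q1_Q1_conj_even assms by blast
  then have "Q1_conj (Q1 (exch w)) = exch (Q1_conj (Q1 w))" by (simp add: Q1_conj_def)
  then show ?thesis using assms(3) unfolding exch_twisted_def by (simp add: exch_radd)
qed

definition odd_lift :: "nat \<Rightarrow> relt \<Rightarrow> relt" where
  "odd_lift n p = adjoin n (Q1 p) p"

definition even_lift :: "nat \<Rightarrow> relt \<Rightarrow> relt" where
  "even_lift n p = adjoin (Suc n) (odd_lift n p) {}"

lemma odd_lift_Wn [simp]: "p \<in> Wn n \<Longrightarrow> odd_lift n p \<in> Wn (Suc n)"
  by (simp add: odd_lift_def)

lemma even_lift_Wn [simp]: "p \<in> Wn n \<Longrightarrow> even_lift n p \<in> Wn (Suc (Suc n))"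
  by (simp add: even_lift_def)

lemma Q1_rmul_xv_Suc: "p \<in> Wn n \<Longrightarrow> Q1 (rmul p (xv (Suc n))) = odd_lift n p"
  by (simp add: rmul_xv_Suc Q1_adjoin odd_lift_def)

lemma rmul_odd_lift_xv: "p \<in> Wn n \<Longrightarrow> rmul (odd_lift n p) (xv (Suc (Suc n))) = even_lift n p"
  by (simp add: rmul_xv_Suc even_lift_def)

lemma rmul_exch_odd_lift_tv:
  "p \<in> Wn n \<Longrightarrow> rmul (exch (odd_lift n p)) (tv (Suc (Suc n))) = exch (even_lift n p)"
  by (simp add: rmul_tv_Suc even_lift_def exch_adjoin)

lemma odd_lift_radd:
  "x \<in> Wn n \<Longrightarrow> y \<in> Wn n \<Longrightarrow> odd_lift n (radd x y) = radd (odd_lift n x) (odd_lift n y)"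
  by (simp add: odd_lift_def adjoin_radd Q1_radd[where n=n])

lemma even_lift_radd:
  "x \<in> Wn n \<Longrightarrow> y \<in> Wn n \<Longrightarrow> even_lift n (radd x y) = radd (even_lift n x) (even_lift n y)"
  by (simp add: even_lift_def odd_lift_radd adjoin_radd)

lemma odd_lift_empty [simp]: "odd_lift n {} = {}"
  by (simp add: odd_lift_def)

lemma even_lift_empty [simp]: "even_lift n {} = {}"
  by (simp add: even_lift_def)

lemma odd_lift_cycle:
  assumes "even n" "p \<in> Wn n" "Pop p = {}" "Pop (exch p) = {}"
  shows "Pop (odd_lift n p) = {}" "Pop (exch (odd_lift n p)) = {}"
proof -
  show "Pop (odd_lift n p) = {}"
    using assms by (simp add: odd_lift_def Pop_adjoin Q1_Q1[where n=n] Pop_Q1[where n=n])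
  have "Pop (exch (Q1 p)) = Q1 (exch p)"
    using Pop_Q1_conj_even[of n "exch p"] assms by (simp add: Q1_conj_exch)
  then show "Pop (exch (odd_lift n p)) = {}"
    using assms by (simp add: odd_lift_def exch_adjoin Pop_adjoin)
qed

lemma Q1_odd_lift: "p \<in> Wn n \<Longrightarrow> Q1 (odd_lift n p) = {}"
  by (simp add: odd_lift_def Q1_adjoin Q1_Q1[where n=n])

lemma exch_odd_lift:
  assumes "even n" "p \<in> Wn n" "exch_twisted p"
  shows "exch (odd_lift n p) = Q1_conj (odd_lift n p)"
proof -
  have p: "exch p = radd p (Q1_conj (Q1 p))" using assms(3) unfolding exch_twisted_def .
  have "Q1_conj p = exch (radd (Q1 p) (Q1 (Q1_conj (Q1 p))))"
    using assms(2) by (simp add: Q1_conj_def p Q1_radd[where n=n])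
  also have "\<dots> = exch (Q1 p)"
    using assms by (simp add: Q1_Q1_conj_even Q1_Q1[where n=n])
  finally show ?thesis
    using assms(2) by (simp add: odd_lift_def exch_adjoin Q1_conj_adjoin p)
qed

lemma even_lift_cycle:
  assumes "even n" "p \<in> Wn n" "Pop p = {}" "Pop (exch p) = {}" "exch_twisted p"
  shows "Pop (even_lift n p) = {}" "Pop (exch (even_lift n p)) = {}"
    "exch_twisted (even_lift n p)" "exch_twisted (exch (even_lift n p))"
proof -
  note cycle = odd_lift_cycle[OF assms(1-4)]
  show "Pop (even_lift n p) = {}" "Pop (exch (even_lift n p)) = {}"
    using assms(2) cycle by (simp_all add: even_lift_def exch_adjoin Pop_adjoin Q1_odd_lift)
  show twisted: "exch_twisted (even_lift n p)"
    using assms(2) exch_odd_lift[OF assms(1,2,5)] unfolding exch_twisted_def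
    by (simp add: even_lift_def exch_adjoin Q1_adjoin Q1_odd_lift Q1_conj_adjoin adjoin_radd)
  show "exch_twisted (exch (even_lift n p))"
    using assms(1,2) twisted by (intro exch_twisted_exch[of "Suc (Suc n)"]) auto
qed

lemma Pop_adjoin_adjoin:
  assumes "a \<in> Wn n" "b \<in> Wn n" "c \<in> Wn n" "d \<in> Wn n"
  shows "Pop (adjoin (Suc n) (adjoin n a b) (adjoin n c d)) =
    adjoin (Suc n) (adjoin n (Pop a) (radd (Q1 a) (Pop b)))
      (adjoin n (radd (Q1 a) (Pop c)) (radd a (radd (Q1 b) (radd (Q1 c) (Pop d)))))"
  using assms by (simp add: Pop_adjoin Q1_adjoin adjoin_radd Q1_radd[where n=n]
      Pop_radd[where n=n] radd_ac)

lemma odd_lift_radd_exch: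
  "s1 \<in> Wn n \<Longrightarrow> s2 \<in> Wn n \<Longrightarrow> radd (odd_lift n s1) (exch (odd_lift n s2)) =
    adjoin n (radd (Q1 s1) (exch s2)) (radd s1 (exch (Q1 s2)))"
  by (simp add: odd_lift_def exch_adjoin adjoin_radd)

lemma even_lift_radd_exch:
  "s1 \<in> Wn n \<Longrightarrow> s2 \<in> Wn n \<Longrightarrow> radd (even_lift n s1) (exch (even_lift n s2)) =
    adjoin (Suc n) (adjoin n (Q1 s1) s1) (adjoin n (exch s2) (exch (Q1 s2)))"
  by (simp add: even_lift_def odd_lift_def exch_adjoin adjoin_radd)

lemma odd_lift_boundary:
  assumes ev: "even n" and W: "s1 \<in> Wn n" "s2 \<in> Wn n"
    and cycle: "Pop s1 = {}" and twisted: "exch_twisted s1"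
    and bdry: "radd (odd_lift n s1) (exch (odd_lift n s2)) \<in> Pop ` Wn (Suc n)"
  shows "exch s1 \<in> Pop ` Wn n" "s1 = {} \<Longrightarrow> exch s2 \<in> Pop ` Wn n"
proof -
  obtain w where w: "w \<in> Wn (Suc n)" "radd (odd_lift n s1) (exch (odd_lift n s2)) = Pop w"
    using bdry by blast
  obtain a b where ab: "a \<in> Wn n" "b \<in> Wn n" "w = adjoin n a b"
    using Wn_Suc_adjoin[OF w(1)] .
  have "adjoin n (radd (Q1 s1) (exch s2)) (radd s1 (exch (Q1 s2))) =
      adjoin n (Pop a) (radd (Q1 a) (Pop b))"
    using w(2) odd_lift_radd_exch[OF W] ab by (simp add: Pop_adjoin)
  then have Q1_s1: "Q1 s1 = radd (Pop a) (exch s2)"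
    and s1: "s1 = radd (radd (Q1 a) (Pop b)) (exch (Q1 s2))"
    using W ab by (simp_all add: adjoin_eq_iff radd_eq_iff radd_ac)
  note lin = Q1_radd[where n=n] Pop_radd[where n=n] Q1_conj_radd[where n=n]
  have "exch s1 = radd s1 (Q1_conj (Q1 s1))" using twisted unfolding exch_twisted_def .
  also have "\<dots> = Pop (radd b (Q1_conj a))"
    apply (subst (1) s1)
    using W ab by (simp add: Q1_s1 lin Pop_Q1_conj_even[OF ev] Q1_conj_exch radd_ac)
  finally show "exch s1 \<in> Pop ` Wn n" using ab by auto
  assume "s1 = {}"
  then have "exch s2 = Pop a" using Q1_s1 by (metis Q1_empty radd_eq_empty_iff)
  then show "exch s2 \<in> Pop ` Wn n" using ab by auto
qed

lemma even_lift_boundary: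
  assumes ev: "even n" and W: "s1 \<in> Wn n" "s2 \<in> Wn n"
    and twisted: "exch_twisted s2"
    and bdry: "radd (even_lift n s1) (exch (even_lift n s2)) \<in> Pop ` Wn (Suc (Suc n))"
  shows "s2 \<in> Pop ` Wn n" "radd s1 (exch s2) \<in> Pop ` Wn n"
proof -
  obtain w where w: "w \<in> Wn (Suc (Suc n))" "radd (even_lift n s1) (exch (even_lift n s2)) = Pop w"
    using bdry by blast
  obtain x y where xy: "x \<in> Wn (Suc n)" "y \<in> Wn (Suc n)" "w = adjoin (Suc n) x y"
    using Wn_Suc_adjoin[OF w(1)] .
  obtain a b where ab: "a \<in> Wn n" "b \<in> Wn n" "x = adjoin n a b"
    using Wn_Suc_adjoin[OF xy(1)] .
  obtain c d where cd: "c \<in> Wn n" "d \<in> Wn n" "y = adjoin n c d"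
    using Wn_Suc_adjoin[OF xy(2)] .
  have "adjoin (Suc n) (adjoin n (Q1 s1) s1) (adjoin n (exch s2) (exch (Q1 s2))) =
      adjoin (Suc n) (adjoin n (Pop a) (radd (Q1 a) (Pop b)))
        (adjoin n (radd (Q1 a) (Pop c)) (radd a (radd (Q1 b) (radd (Q1 c) (Pop d)))))"
    using w(2) even_lift_radd_exch[OF W] Pop_adjoin_adjoin[OF ab(1,2) cd(1,2)] xy ab cd by simp
  then have s1: "s1 = radd (Q1 a) (Pop b)" and exch_s2: "exch s2 = radd (Q1 a) (Pop c)"
    and exch_Q1_s2: "exch (Q1 s2) = radd a (radd (Q1 b) (radd (Q1 c) (Pop d)))"
    using W ab cd by (simp_all add: adjoin_eq_iff)
  have "s2 = exch (radd s2 (Q1_conj (Q1 s2)))"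
    using twisted unfolding exch_twisted_def by (metis exch_exch)
  also have "\<dots> = radd (exch s2) (Q1 (exch (Q1 s2)))"
    by (simp add: exch_radd Q1_conj_def)
  also have "\<dots> = Pop (radd c (Q1 d))"
    unfolding exch_s2 exch_Q1_s2 using ab cd
    by (simp add: Q1_radd[where n=n] Pop_radd[where n=n] Q1_Q1[where n=n] Pop_Q1[where n=n]
        radd_ac)
  finally show "s2 \<in> Pop ` Wn n" using cd by auto
  have "radd s1 (exch s2) = Pop (radd b c)"
    unfolding s1 exch_s2 using ab cd by (simp add: Pop_radd[where n=n] radd_ac)
  then show "radd s1 (exch s2) \<in> Pop ` Wn n" using ab cd by auto
qed

lemma adjoin_cycle_eq_odd_lifts:
  assumes ev: "even n"
    and W: "a \<in> Wn n" "b \<in> Wn n" "s1 \<in> Wn n" "s2 \<in> Wn n" "w1 \<in> Wn n" "w2 \<in> Wn n"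
    and cycle: "Pop a = {}" "Pop b = Q1 a" "Pop s1 = {}" "exch_twisted s1"
    and w1: "Pop w1 = radd a (exch s2)"
    and w2: "Pop w2 = radd (radd b (Q1_conj a)) (exch s1)"
  defines "v \<equiv> radd w1 (Q1_conj s1)"
  shows "adjoin n a b = radd (radd (odd_lift n s1) (exch (odd_lift n s2)))
    (Pop (adjoin n v (radd w2 (Q1_conj v))))"
proof -
  have e1: "exch s1 = radd s1 (Q1_conj (Q1 s1))" using cycle(4) unfolding exch_twisted_def .
  have WW: "exch (Q1 s2) \<in> Wn n" "exch s2 \<in> Wn n" "v \<in> Wn n" using W by (simp_all add: v_def)
  note alg = Q1_radd[where n=n] Pop_radd[where n=n] Q1_conj_radd[where n=n] Q1_Q1[where n=n]
    Pop_Q1[where n=n] Pop_Pop[where n=n] Q1_conj_Q1_conj[where n=n] Q1_Q1_conj_even[OF ev]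
    Pop_Q1_conj_even[OF ev] Q1_conj_exch
  have a: "a = radd (radd (Q1 s1) (exch s2)) (Pop v)"
    unfolding v_def using W WW cycle w1 by (simp add: alg radd_ac)
  have b: "b = radd (radd s1 (exch (Q1 s2))) (radd (Q1 v) (Pop (radd w2 (Q1_conj v))))"
    unfolding v_def using W WW cycle w1 w2 e1 by (simp add: alg radd_ac)
  show ?thesis
    using W WW by (subst a, subst b) (simp add: odd_lift_radd_exch Pop_adjoin adjoin_radd radd_ac)
qed

lemma adjoin_adjoin_cycle_eq_even_lifts:
  assumes ev: "even n"
    and W: "a \<in> Wn n" "b \<in> Wn n" "c \<in> Wn n" "d \<in> Wn n"
      "s1 \<in> Wn n" "s2 \<in> Wn n" "w1 \<in> Wn n" "w2 \<in> Wn n"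
    and cycle: "Pop b = Q1 a" "Pop c = Q1 a" "a = radd (Q1 b) (radd (Q1 c) (Pop d))"
      "Pop s1 = {}" "Pop s2 = {}" "exch_twisted s2"
    and w1: "Pop w1 = radd (radd (radd b c) (exch s2)) s1"
    and w2: "Pop w2 = radd (radd c (Q1 d)) s2"
  defines "u \<equiv> radd (radd d (exch (Q1 s2))) (Q1 w1)"
  shows "adjoin (Suc n) (adjoin n a b) (adjoin n c d) =
    radd (radd (even_lift n s1) (exch (even_lift n s2)))
      (Pop (adjoin (Suc n) (adjoin n u (radd w1 w2)) (adjoin n w2 {})))"
proof -
  have e2: "exch s2 = radd s2 (Q1_conj (Q1 s2))" using cycle(6) unfolding exch_twisted_def .
  have WW: "exch (Q1 s2) \<in> Wn n" "exch s2 \<in> Wn n" "u \<in> Wn n" "radd w1 w2 \<in> Wn n"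
    using W by (simp_all add: u_def)
  note alg = Q1_radd[where n=n] Pop_radd[where n=n] Q1_conj_radd[where n=n] Q1_Q1[where n=n]
    Pop_Q1[where n=n] Pop_Pop[where n=n] Q1_conj_Q1_conj[where n=n] Q1_Q1_conj_even[OF ev]
    Pop_Q1_conj_even[OF ev] Q1_conj_exch[symmetric]
  have a: "a = radd (Q1 s1) (Pop u)"
    unfolding u_def using W WW cycle e2 w1 w2 by (simp add: alg radd_ac)
  have b: "b = radd s1 (radd (Q1 u) (Pop (radd w1 w2)))"
    unfolding u_def using W WW cycle e2 w1 w2 by (simp add: alg radd_ac)
  have c: "c = radd (exch s2) (radd (Q1 u) (Pop w2))"
    unfolding u_def using W WW cycle e2 w1 w2 by (simp add: alg radd_ac)
  have d: "d = radd (exch (Q1 s2)) (radd u (radd (Q1 (radd w1 w2)) (Q1 w2)))"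
    unfolding u_def using W WW by (simp add: alg radd_ac)
  show ?thesis
    using W WW by (subst a, subst b, subst c, subst d)
      (simp add: even_lift_radd_exch Pop_adjoin_adjoin adjoin_radd radd_ac)
qed

definition twisted_cycle :: "nat \<Rightarrow> relt \<Rightarrow> bool" where
  "twisted_cycle n p \<longleftrightarrow> p \<in> Wn n \<and> Pop p = {} \<and> Pop (exch p) = {} \<and> exch_twisted p"

lemma twisted_cycle_empty: "twisted_cycle n {}"
  by (simp add: twisted_cycle_def exch_twisted_def)

lemma twisted_cycle_radd:
  assumes "twisted_cycle n a" "twisted_cycle n b"
  shows "twisted_cycle n (radd a b)"
proof -
  have W: "a \<in> Wn n" "b \<in> Wn n"
    and P: "Pop a = {}" "Pop b = {}" "Pop (exch a) = {}" "Pop (exch b) = {}"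
    and e: "exch a = radd a (Q1_conj (Q1 a))" "exch b = radd b (Q1_conj (Q1 b))"
    using assms unfolding twisted_cycle_def exch_twisted_def by blast+
  have "Pop (exch (radd a b)) = radd (Pop (exch a)) (Pop (exch b))"
    using W by (simp add: exch_radd Pop_radd[where n=n])
  moreover have "exch (radd a b) = radd (radd a b) (Q1_conj (Q1 (radd a b)))"
    using W by (simp add: exch_radd e Q1_radd[where n=n] Q1_conj_radd[where n=n] radd_ac)
  ultimately show ?thesis
    using W P unfolding twisted_cycle_def exch_twisted_def by (simp add: Pop_radd[where n=n])
qed

lemma ssum_twisted_cycle:
  "finite S \<Longrightarrow> (\<And>p. p \<in> S \<Longrightarrow> twisted_cycle n p) \<Longrightarrow> twisted_cycle n (ssum S)"
  by (induction S rule: finite_induct)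
    (simp_all add: sumF_insert twisted_cycle_empty twisted_cycle_radd)

lemma even_lift_twisted_cycle:
  assumes "even n" "twisted_cycle n p"
  shows "twisted_cycle (Suc (Suc n)) (even_lift n p)"
    "twisted_cycle (Suc (Suc n)) (exch (even_lift n p))"
  using even_lift_cycle[of n p] assms unfolding twisted_cycle_def by simp_all

lemma odd_cycle_decompose:
  assumes ev: "even n" and z: "z \<in> Wn (Suc n)" "Pop z = {}"
    and R: "\<And>s. s \<in> R \<Longrightarrow> twisted_cycle n s" "exch ` R \<subseteq> R"
    and reps: "\<And>y. y \<in> Wn n \<Longrightarrow> Pop y = {} \<Longrightarrow> \<exists>s\<in>R. radd y s \<in> Pop ` Wn n"
  shows "\<exists>s1\<in>R. \<exists>s2\<in>R. radd z (radd (odd_lift n s1) (exch (odd_lift n s2))) \<in> Pop ` Wn (Suc n)"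
proof -
  obtain a b where ab: "a \<in> Wn n" "b \<in> Wn n" "z = adjoin n a b"
    using Wn_Suc_adjoin[OF z(1)] .
  have "adjoin n (Pop a) (radd (Q1 a) (Pop b)) = {}" using z(2) ab by (simp add: Pop_adjoin)
  then have cycle: "Pop a = {}" "Pop b = Q1 a"
    using ab by (simp_all add: adjoin_eq_empty_iff radd_eq_empty_iff)
  obtain s' where s': "s' \<in> R" "radd a s' \<in> Pop ` Wn n" using reps[OF ab(1) cycle(1)] by blast
  define s2 where "s2 = exch s'"
  obtain w1 where w1: "w1 \<in> Wn n" "Pop w1 = radd a (exch s2)"
    using s'(2) unfolding s2_def by auto
  have "Pop (radd b (Q1_conj a)) = {}"
    using ab cycle by (simp add: Pop_radd[where n=n] Pop_Q1_conj_even[OF ev])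
  moreover have "radd b (Q1_conj a) \<in> Wn n" using ab by simp
  ultimately obtain s where s: "s \<in> R" "radd (radd b (Q1_conj a)) s \<in> Pop ` Wn n"
    using reps by blast
  define s1 where "s1 = exch s"
  obtain w2 where w2: "w2 \<in> Wn n" "Pop w2 = radd (radd b (Q1_conj a)) (exch s1)"
    using s(2) unfolding s1_def by auto
  have R12: "s1 \<in> R" "s2 \<in> R" using s(1) s'(1) R(2) unfolding s1_def s2_def by blast+
  then have s12: "twisted_cycle n s1" "twisted_cycle n s2" using R(1) by blast+
  define v where "v = radd w1 (Q1_conj s1)"
  define w where "w = adjoin n v (radd w2 (Q1_conj v))"
  have "z = radd (radd (odd_lift n s1) (exch (odd_lift n s2))) (Pop w)"
    unfolding ab(3) w_def v_def using s12 unfolding twisted_cycle_def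
    by (intro adjoin_cycle_eq_odd_lifts[OF ev ab(1,2) _ _ w1(1) w2(1) cycle _ _ w1(2) w2(2)]) auto
  then have "radd z (radd (odd_lift n s1) (exch (odd_lift n s2))) = Pop w"
    by (simp add: radd_ac)
  moreover have "w \<in> Wn (Suc n)"
    using s12 w1 w2 by (simp add: w_def v_def twisted_cycle_def)
  ultimately show ?thesis using R12 by blast
qed

lemma Wn_Suc_Suc_cycle_cases:
  assumes z: "z \<in> Wn (Suc (Suc n))" "Pop z = {}"
  obtains a b c d where "a \<in> Wn n" "b \<in> Wn n" "c \<in> Wn n" "d \<in> Wn n"
    "z = adjoin (Suc n) (adjoin n a b) (adjoin n c d)"
    "Pop b = Q1 a" "Pop c = Q1 a" "a = radd (Q1 b) (radd (Q1 c) (Pop d))"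
    "Pop d = radd a (radd (Q1 b) (Q1 c))"
proof -
  obtain x y where xy: "x \<in> Wn (Suc n)" "y \<in> Wn (Suc n)" "z = adjoin (Suc n) x y"
    using Wn_Suc_adjoin[OF z(1)] .
  obtain a b where ab: "a \<in> Wn n" "b \<in> Wn n" "x = adjoin n a b"
    using Wn_Suc_adjoin[OF xy(1)] .
  obtain c d where cd: "c \<in> Wn n" "d \<in> Wn n" "y = adjoin n c d"
    using Wn_Suc_adjoin[OF xy(2)] .
  have "Pop (adjoin (Suc n) (adjoin n a b) (adjoin n c d)) = {}" using z(2) xy ab cd by simp
  then have "radd (Q1 a) (Pop b) = {}" "radd (Q1 a) (Pop c) = {}"
      "radd a (radd (Q1 b) (radd (Q1 c) (Pop d))) = {}"
    using ab cd by (simp_all add: Pop_adjoin_adjoin adjoin_eq_empty_iff)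
  then have "Pop b = Q1 a" "Pop c = Q1 a" "a = radd (Q1 b) (radd (Q1 c) (Pop d))"
      "Pop d = radd a (radd (Q1 b) (Q1 c))"
    unfolding radd_eq_empty_iff by (simp_all add: radd_eq_iff radd_ac)
  with ab cd xy show ?thesis using that by blast
qed

lemma even_cycle_decompose:
  assumes ev: "even n" and z: "z \<in> Wn (Suc (Suc n))" "Pop z = {}"
    and R: "\<And>s. s \<in> R \<Longrightarrow> twisted_cycle n s"
    and reps: "\<And>y. y \<in> Wn n \<Longrightarrow> Pop y = {} \<Longrightarrow> \<exists>s\<in>R. radd y s \<in> Pop ` Wn n"
  shows "\<exists>s1\<in>R. \<exists>s2\<in>R.
    radd z (radd (even_lift n s1) (exch (even_lift n s2))) \<in> Pop ` Wn (Suc (Suc n))"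
proof -
  obtain a b c d where ab: "a \<in> Wn n" "b \<in> Wn n" and cd: "c \<in> Wn n" "d \<in> Wn n"
    and z_eq: "z = adjoin (Suc n) (adjoin n a b) (adjoin n c d)"
    and cycle: "Pop b = Q1 a" "Pop c = Q1 a" "a = radd (Q1 b) (radd (Q1 c) (Pop d))"
      "Pop d = radd a (radd (Q1 b) (Q1 c))"
    using Wn_Suc_Suc_cycle_cases[OF z] .
  note lin = Q1_radd[where n=n] Pop_radd[where n=n]
  have "Pop (radd c (Q1 d)) = {}"
    using ab cd cycle(2,4) by (simp add: lin Pop_Q1[where n=n] Q1_Q1[where n=n])
  moreover have "radd c (Q1 d) \<in> Wn n" using cd by simp
  ultimately obtain s2 where s2: "s2 \<in> R" "radd (radd c (Q1 d)) s2 \<in> Pop ` Wn n"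
    using reps by blast
  then have s2_cycle: "twisted_cycle n s2" using R by blast
  then have "Pop (radd (radd b c) (exch s2)) = {}"
    using ab cd cycle(1,2) by (simp add: lin twisted_cycle_def)
  moreover have "radd (radd b c) (exch s2) \<in> Wn n"
    using ab cd s2_cycle by (simp add: twisted_cycle_def)
  ultimately obtain s1 where s1: "s1 \<in> R" "radd (radd (radd b c) (exch s2)) s1 \<in> Pop ` Wn n"
    using reps by blast
  then have s1_cycle: "twisted_cycle n s1" using R by blast
  obtain w1 where w1: "w1 \<in> Wn n" "Pop w1 = radd (radd (radd b c) (exch s2)) s1"
    using s1(2) by auto
  obtain w2 where w2: "w2 \<in> Wn n" "Pop w2 = radd (radd c (Q1 d)) s2"
    using s2(2) by auto
  define u where "u = radd (radd d (exch (Q1 s2))) (Q1 w1)"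
  define w where "w = adjoin (Suc n) (adjoin n u (radd w1 w2)) (adjoin n w2 {})"
  have "z = radd (radd (even_lift n s1) (exch (even_lift n s2))) (Pop w)"
    unfolding z_eq w_def u_def using s1_cycle s2_cycle unfolding twisted_cycle_def
    by (intro adjoin_adjoin_cycle_eq_even_lifts[OF ev ab(1,2) cd(1,2) _ _ w1(1) w2(1)
          cycle(1-3) _ _ _ w1(2) w2(2)]) auto
  then have "radd z (radd (even_lift n s1) (exch (even_lift n s2))) = Pop w"
    by (simp add: radd_ac)
  moreover have "w \<in> Wn (Suc (Suc n))"
    using w1 w2 cd s2_cycle by (simp add: w_def u_def twisted_cycle_def)
  ultimately show ?thesis using s1(1) s2(1) by blast
qed

section \<open>Bases of the \<open>P\<close>-homology\<close>

definition P_independent :: "relt set \<Rightarrow> nat \<Rightarrow> bool" where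
  "P_independent B n \<longleftrightarrow> (\<forall>S\<subseteq>B. ssum S \<in> Pop ` Wn n \<longrightarrow> S = {})"

lemma P_independentD: "P_independent B n \<Longrightarrow> S \<subseteq> B \<Longrightarrow> ssum S \<in> Pop ` Wn n \<Longrightarrow> S = {}"
  unfolding P_independent_def by blast

definition P_spanning :: "relt set \<Rightarrow> nat \<Rightarrow> bool" where
  "P_spanning B n \<longleftrightarrow> (\<forall>z\<in>Wn n. Pop z = {} \<longrightarrow> (\<exists>S\<subseteq>B. radd z (ssum S) \<in> Pop ` Wn n))"

lemma P_spanningD:
  "P_spanning B n \<Longrightarrow> z \<in> Wn n \<Longrightarrow> Pop z = {} \<Longrightarrow> \<exists>S\<subseteq>B. radd z (ssum S) \<in> Pop ` Wn n"
  unfolding P_spanning_def by blast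

definition P_basis :: "relt set \<Rightarrow> nat \<Rightarrow> bool" where
  "P_basis B n \<longleftrightarrow> finite B \<and> (\<forall>p\<in>B. p \<in> Wn n \<and> Pop p = {}) \<and>
     P_independent B n \<and> P_spanning B n"

lemma ssum_Un_images:
  assumes "finite B" "B \<subseteq> Wn n" "Wn_additive n F" "Wn_additive n G"
    "inj_on F B" "inj_on G B" "F ` B \<inter> G ` B = {}" "S1 \<subseteq> B" "S2 \<subseteq> B"
  shows "ssum (F ` S1 \<union> G ` S2) = radd (F (ssum S1)) (G (ssum S2))"
proof -
  have fin: "finite S1" "finite S2" using assms(1,8,9) finite_subset by blast+
  have "ssum (F ` S1 \<union> G ` S2) = radd (ssum (F ` S1)) (ssum (G ` S2))"
    using assms(7-9) fin by (intro sumF_Un_disjoint) auto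
  also have "ssum (F ` S1) = sumF F S1"
    using assms(5,8) by (simp add: sumF_reindex inj_on_subset)
  also have "ssum (G ` S2) = sumF G S2"
    using assms(6,9) by (simp add: sumF_reindex inj_on_subset)
  finally show ?thesis
    using assms(2-4,8,9) fin by (simp add: sumF_additive subset_trans)
qed

lemma independent_images_inj_disjoint:
  assumes BW: "B \<subseteq> Wn n" and add: "Wn_additive n F" "Wn_additive n G"
    and indep: "\<And>S1 S2. S1 \<subseteq> B \<Longrightarrow> S2 \<subseteq> B \<Longrightarrow>
      radd (F (ssum S1)) (G (ssum S2)) \<in> Pop ` Wn m \<Longrightarrow> S1 = {} \<and> S2 = {}"
  shows "inj_on F B" "inj_on G B" "F ` B \<inter> G ` B = {}"
proof -
  have F0: "F {} = {}" and G0: "G {} = {}" using add by (simp_all add: Wn_additive_def)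
  have bdry0: "{} \<in> Pop ` Wn m" by (metis Pop_empty empty_Wn image_eqI)
  have pair: "radd (F p) (F q) = F (ssum {p, q})" "radd (G p) (G q) = G (ssum {p, q})"
    if "p \<in> B" "q \<in> B" "p \<noteq> q" for p q
  proof -
    have "ssum {p, q} = radd p q" using that(3) by (simp add: sumF_insert)
    moreover have "p \<in> Wn n" "q \<in> Wn n" using that(1,2) BW by blast+
    ultimately show "radd (F p) (F q) = F (ssum {p, q})" "radd (G p) (G q) = G (ssum {p, q})"
      using add unfolding Wn_additive_def by metis+
  qed
  have "F p \<noteq> F q" if "p \<in> B" "q \<in> B" "p \<noteq> q" for p q
  proof
    assume "F p = F q"
    then have "radd (F (ssum {p, q})) (G (ssum {})) \<in> Pop ` Wn m"
      using pair(1)[OF that] bdry0 G0 by simp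
    then show False using indep[of "{p, q}" "{}"] that by simp
  qed
  moreover have "G p \<noteq> G q" if "p \<in> B" "q \<in> B" "p \<noteq> q" for p q
  proof
    assume "G p = G q"
    then have "radd (F (ssum {})) (G (ssum {p, q})) \<in> Pop ` Wn m"
      using pair(2)[OF that] bdry0 F0 by simp
    then show False using indep[of "{}" "{p, q}"] that by simp
  qed
  ultimately show "inj_on F B" "inj_on G B" unfolding inj_on_def by blast+
  show "F ` B \<inter> G ` B = {}"
  proof (rule ccontr)
    assume "F ` B \<inter> G ` B \<noteq> {}"
    then obtain p q where pq: "p \<in> B" "q \<in> B" "F p = G q" by blast
    then have "radd (F (ssum {p})) (G (ssum {q})) \<in> Pop ` Wn m" using bdry0 by simp
    then show False using indep[of "{p}" "{q}"] pq by blast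
  qed
qed

lemma P_basis_Un_images:
  assumes fin: "finite B" and BW: "B \<subseteq> Wn n"
    and add: "Wn_additive n F" "Wn_additive n G"
    and cycles: "\<And>p. p \<in> B \<Longrightarrow> F p \<in> Wn m \<and> Pop (F p) = {} \<and> G p \<in> Wn m \<and> Pop (G p) = {}"
    and indep: "\<And>S1 S2. S1 \<subseteq> B \<Longrightarrow> S2 \<subseteq> B \<Longrightarrow>
      radd (F (ssum S1)) (G (ssum S2)) \<in> Pop ` Wn m \<Longrightarrow> S1 = {} \<and> S2 = {}"
    and span: "\<And>z. z \<in> Wn m \<Longrightarrow> Pop z = {} \<Longrightarrow>
      \<exists>S1\<subseteq>B. \<exists>S2\<subseteq>B. radd z (radd (F (ssum S1)) (G (ssum S2))) \<in> Pop ` Wn m"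
  shows "P_basis (F ` B \<union> G ` B) m"
proof -
  have inj_disj: "inj_on F B" "inj_on G B" "F ` B \<inter> G ` B = {}"
    by (rule independent_images_inj_disjoint[OF BW add], fact indep)+
  note sums = ssum_Un_images[OF fin BW add inj_disj]
  have "P_independent (F ` B \<union> G ` B) m"
    unfolding P_independent_def
  proof (intro allI impI)
    fix S assume S: "S \<subseteq> F ` B \<union> G ` B" "ssum S \<in> Pop ` Wn m"
    define S1 where "S1 = {p \<in> B. F p \<in> S}"
    define S2 where "S2 = {p \<in> B. G p \<in> S}"
    have S12: "S1 \<subseteq> B" "S2 \<subseteq> B" unfolding S1_def S2_def by auto
    have S_eq: "S = F ` S1 \<union> G ` S2" using S(1) unfolding S1_def S2_def by blast
    then have "radd (F (ssum S1)) (G (ssum S2)) \<in> Pop ` Wn m" using S(2) sums[OF S12] by simp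
    then show "S = {}" using indep[OF S12] S_eq by simp
  qed
  moreover have "P_spanning (F ` B \<union> G ` B) m"
    unfolding P_spanning_def
  proof (intro ballI impI)
    fix z assume "z \<in> Wn m" "Pop z = {}"
    then obtain S1 S2 where "S1 \<subseteq> B" "S2 \<subseteq> B"
        "radd z (radd (F (ssum S1)) (G (ssum S2))) \<in> Pop ` Wn m"
      using span[of z] by auto
    then show "\<exists>S\<subseteq>F ` B \<union> G ` B. radd z (ssum S) \<in> Pop ` Wn m"
      by (intro exI[of _ "F ` S1 \<union> G ` S2"]) (auto simp: sums)
  qed
  ultimately show ?thesis using fin cycles unfolding P_basis_def by auto
qed

lemma Wn_additive_odd_lift: "Wn_additive n (odd_lift n)"
  by (simp add: Wn_additive_def odd_lift_radd)

lemma Wn_additive_exch_odd_lift: "Wn_additive n (\<lambda>p. exch (odd_lift n p))"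
  by (simp add: Wn_additive_def odd_lift_radd exch_radd)

lemma Wn_additive_even_lift: "Wn_additive n (even_lift n)"
  by (simp add: Wn_additive_def even_lift_radd)

lemma Wn_additive_exch_even_lift: "Wn_additive n (\<lambda>p. exch (even_lift n p))"
  by (simp add: Wn_additive_def even_lift_radd exch_radd)

definition twisted_basis :: "relt set \<Rightarrow> nat \<Rightarrow> bool" where
  "twisted_basis B n \<longleftrightarrow> P_basis B n \<and> exch ` B \<subseteq> B \<and> (\<forall>p\<in>B. twisted_cycle n p)"

lemma twisted_basis_ssum:
  assumes "twisted_basis B n" "S \<subseteq> B"
  shows "twisted_cycle n (ssum S)"
proof (rule ssum_twisted_cycle)
  have "finite B" using assms(1) unfolding twisted_basis_def P_basis_def by simp
  with assms(2) show "finite S" by (rule finite_subset)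
  show "twisted_cycle n p" if "p \<in> S" for p
    using assms that unfolding twisted_basis_def by (simp add: subset_iff)
qed

lemma twisted_basis_exch_ssum_boundary:
  assumes "twisted_basis B n" "S \<subseteq> B" "exch (ssum S) \<in> Pop ` Wn n"
  shows "S = {}"
proof -
  have B: "finite B" "B \<subseteq> Wn n" "exch ` B \<subseteq> B" "P_independent B n"
    using assms(1) unfolding twisted_basis_def P_basis_def by auto
  moreover have "finite S" using B(1) assms(2) by (rule finite_subset[rotated])
  ultimately have "ssum (exch ` S) = exch (ssum S)"
    using assms(2) by (intro ssum_image_exch[of _ n]) auto
  moreover have "exch ` S \<subseteq> B" using B(3) assms(2) by blast
  ultimately have "exch ` S = {}" using P_independentD[OF B(4), of "exch ` S"] assms(3) by simp
  then show ?thesis by simp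
qed

lemma twisted_basis_spanning:
  assumes "twisted_basis B n" "y \<in> Wn n" "Pop y = {}"
  shows "\<exists>s\<in>ssum ` Pow B. radd y s \<in> Pop ` Wn n"
proof -
  have "P_spanning B n" using assms(1) unfolding twisted_basis_def P_basis_def by simp
  from P_spanningD[OF this assms(2,3)] obtain S where "S \<subseteq> B" "radd y (ssum S) \<in> Pop ` Wn n"
    by blast
  then show ?thesis by (intro bexI[of _ "ssum S"]) auto
qed

lemma ssum_Pow_exch_closed:
  assumes "twisted_basis B n"
  shows "exch ` ssum ` Pow B \<subseteq> ssum ` Pow B"
proof
  fix s assume "s \<in> exch ` ssum ` Pow B"
  then obtain S where S: "S \<subseteq> B" "s = exch (ssum S)" by auto
  have B: "finite B" "B \<subseteq> Wn n" "exch ` B \<subseteq> B"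
    using assms unfolding twisted_basis_def P_basis_def by auto
  have "s = ssum (exch ` S)"
    using S B(1,2) finite_subset[OF S(1) B(1)] by (simp add: ssum_image_exch[of _ n])
  moreover have "exch ` S \<subseteq> B" using B(3) S(1) by blast
  ultimately show "s \<in> ssum ` Pow B" by auto
qed

lemma P_basis_odd_step:
  assumes ev: "even n" and B: "twisted_basis B n"
  shows "P_basis (odd_lift n ` B \<union> (\<lambda>p. exch (odd_lift n p)) ` B) (Suc n)"
proof (rule P_basis_Un_images[OF _ _ Wn_additive_odd_lift Wn_additive_exch_odd_lift])
  show "finite B" "B \<subseteq> Wn n"
    using B unfolding twisted_basis_def P_basis_def by auto
  fix p assume "p \<in> B"
  then have "twisted_cycle n p" using B unfolding twisted_basis_def by blast
  then show "odd_lift n p \<in> Wn (Suc n) \<and> Pop (odd_lift n p) = {} \<and>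
      exch (odd_lift n p) \<in> Wn (Suc n) \<and> Pop (exch (odd_lift n p)) = {}"
    using odd_lift_cycle[OF ev] unfolding twisted_cycle_def by simp
next
  fix S1 S2 assume S: "S1 \<subseteq> B" "S2 \<subseteq> B"
    and bdry: "radd (odd_lift n (ssum S1)) (exch (odd_lift n (ssum S2))) \<in> Pop ` Wn (Suc n)"
  have c: "ssum S1 \<in> Wn n" "ssum S2 \<in> Wn n" "Pop (ssum S1) = {}" "exch_twisted (ssum S1)"
    using twisted_basis_ssum[OF B S(1)] twisted_basis_ssum[OF B S(2)]
    unfolding twisted_cycle_def by simp_all
  have "S1 = {}"
    using odd_lift_boundary(1)[OF ev c bdry] by (rule twisted_basis_exch_ssum_boundary[OF B S(1)])
  moreover have "S2 = {}"
    using odd_lift_boundary(2)[OF ev c bdry] \<open>S1 = {}\<close>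
    by (intro twisted_basis_exch_ssum_boundary[OF B S(2)]) simp
  ultimately show "S1 = {} \<and> S2 = {}" ..
next
  fix z assume z: "z \<in> Wn (Suc n)" "Pop z = {}"
  have "\<exists>s1\<in>ssum ` Pow B. \<exists>s2\<in>ssum ` Pow B.
      radd z (radd (odd_lift n s1) (exch (odd_lift n s2))) \<in> Pop ` Wn (Suc n)"
    using ssum_Pow_exch_closed[OF B] twisted_basis_spanning[OF B] twisted_basis_ssum[OF B]
    by (intro odd_cycle_decompose[OF ev z]) auto
  then obtain S1 S2 where "S1 \<subseteq> B" "S2 \<subseteq> B"
      "radd z (radd (odd_lift n (ssum S1)) (exch (odd_lift n (ssum S2)))) \<in> Pop ` Wn (Suc n)"
    by auto
  then show "\<exists>S1\<subseteq>B. \<exists>S2\<subseteq>B.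
      radd z (radd (odd_lift n (ssum S1)) (exch (odd_lift n (ssum S2)))) \<in> Pop ` Wn (Suc n)"
    by (intro exI conjI)
qed

lemma P_basis_even_step:
  assumes ev: "even n" and B: "twisted_basis B n"
  shows "P_basis (even_lift n ` B \<union> (\<lambda>p. exch (even_lift n p)) ` B) (Suc (Suc n))"
proof (rule P_basis_Un_images[OF _ _ Wn_additive_even_lift Wn_additive_exch_even_lift])
  show "finite B" "B \<subseteq> Wn n"
    using B unfolding twisted_basis_def P_basis_def by auto
  fix p assume "p \<in> B"
  then have "twisted_cycle n p" using B unfolding twisted_basis_def by blast
  then show "even_lift n p \<in> Wn (Suc (Suc n)) \<and> Pop (even_lift n p) = {} \<and>
      exch (even_lift n p) \<in> Wn (Suc (Suc n)) \<and> Pop (exch (even_lift n p)) = {}"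
    using even_lift_twisted_cycle[OF ev] unfolding twisted_cycle_def by blast
next
  fix S1 S2 assume S: "S1 \<subseteq> B" "S2 \<subseteq> B"
    and bdry: "radd (even_lift n (ssum S1)) (exch (even_lift n (ssum S2)))
      \<in> Pop ` Wn (Suc (Suc n))"
  have indep: "P_independent B n" using B unfolding twisted_basis_def P_basis_def by simp
  have c: "ssum S1 \<in> Wn n" "ssum S2 \<in> Wn n" "exch_twisted (ssum S2)"
    using twisted_basis_ssum[OF B S(1)] twisted_basis_ssum[OF B S(2)]
    unfolding twisted_cycle_def by simp_all
  have "S2 = {}"
    using even_lift_boundary(1)[OF ev c bdry] by (rule P_independentD[OF indep S(2)])
  moreover have "S1 = {}"
    using even_lift_boundary(2)[OF ev c bdry] \<open>S2 = {}\<close>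
    by (intro P_independentD[OF indep S(1)]) simp
  ultimately show "S1 = {} \<and> S2 = {}" by simp
next
  fix z assume z: "z \<in> Wn (Suc (Suc n))" "Pop z = {}"
  have "\<exists>s1\<in>ssum ` Pow B. \<exists>s2\<in>ssum ` Pow B.
      radd z (radd (even_lift n s1) (exch (even_lift n s2))) \<in> Pop ` Wn (Suc (Suc n))"
    using twisted_basis_spanning[OF B] twisted_basis_ssum[OF B]
    by (intro even_cycle_decompose[OF ev z]) auto
  then obtain S1 S2 where "S1 \<subseteq> B" "S2 \<subseteq> B"
      "radd z (radd (even_lift n (ssum S1)) (exch (even_lift n (ssum S2))))
        \<in> Pop ` Wn (Suc (Suc n))"
    by auto
  then show "\<exists>S1\<subseteq>B. \<exists>S2\<subseteq>B.
      radd z (radd (even_lift n (ssum S1)) (exch (even_lift n (ssum S2))))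
        \<in> Pop ` Wn (Suc (Suc n))"
    by (intro exI conjI)
qed

lemma twisted_basis_even_step:
  assumes ev: "even n" and B: "twisted_basis B n"
  shows "twisted_basis (even_lift n ` B \<union> (\<lambda>p. exch (even_lift n p)) ` B) (Suc (Suc n))"
proof -
  have "twisted_cycle (Suc (Suc n)) (even_lift n p)"
    "twisted_cycle (Suc (Suc n)) (exch (even_lift n p))" if "p \<in> B" for p
    using that B even_lift_twisted_cycle[OF ev] unfolding twisted_basis_def by blast+
  moreover have "exch ` (even_lift n ` B \<union> (\<lambda>p. exch (even_lift n p)) ` B) \<subseteq>
      even_lift n ` B \<union> (\<lambda>p. exch (even_lift n p)) ` B"
    by auto
  ultimately show ?thesis using P_basis_even_step[OF ev B] unfolding twisted_basis_def by blast
qed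

lemma Pop_Wn_0: "Pop ` Wn 0 = {{}}"
proof -
  have "Pop z = {}" if "z \<in> Wn 0" for z using Wn_0_cases[OF that] by auto
  then show ?thesis using empty_Wn[of 0] by (metis Pop_empty image_cong image_constant)
qed

lemma twisted_basis_one: "twisted_basis {one} 0"
proof -
  have one: "one \<noteq> {}" by (simp add: one_def)
  have "P_independent {one} 0"
    unfolding P_independent_def Pop_Wn_0 using one by (auto simp: subset_singleton_iff)
  moreover have "P_spanning {one} 0"
    unfolding P_spanning_def Pop_Wn_0
  proof (intro ballI impI)
    fix z assume "z \<in> Wn 0"
    then consider "z = {}" | "z = one" using Wn_0_cases by blast
    then show "\<exists>S\<subseteq>{one}. radd z (ssum S) \<in> {{}}"
      by cases (intro exI[of _ "{}"], simp, intro exI[of _ "{one}"], simp)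
  qed
  moreover have "twisted_cycle 0 one"
    by (simp add: twisted_cycle_def exch_twisted_def one_Wn)
  ultimately show ?thesis by (simp add: twisted_basis_def P_basis_def one_Wn)
qed

lemma Beven_Suc_lifts:
  assumes "Beven t \<subseteq> Wn (2 * t)"
  shows "Beven (Suc t) = even_lift (2 * t) ` Beven t \<union> (\<lambda>p. exch (even_lift (2 * t) p)) ` Beven t"
proof -
  have "rmul (Q1 (rmul b (xv (2*t+1)))) (xv (2*t+2)) = even_lift (2*t) b"
    "rmul (exch (Q1 (rmul b (xv (2*t+1))))) (tv (2*t+2)) = exch (even_lift (2*t) b)"
    if "b \<in> Beven t" for b
    using that assms Q1_rmul_xv_Suc[of b "2*t"] rmul_odd_lift_xv[of b "2*t"]
      rmul_exch_odd_lift_tv[of b "2*t"] by auto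
  then show ?thesis by (auto simp: Setcompr_eq_image)
qed

lemma Bodd_lifts:
  assumes "Beven t \<subseteq> Wn (2 * t)"
  shows "Bodd t = odd_lift (2 * t) ` Beven t \<union> (\<lambda>p. exch (odd_lift (2 * t) p)) ` Beven t"
proof -
  have "Q1 (rmul b (xv (2*t+1))) = odd_lift (2*t) b" if "b \<in> Beven t" for b
    using that assms Q1_rmul_xv_Suc[of b "2*t"] by auto
  then show ?thesis unfolding Bodd_def by (auto simp: Setcompr_eq_image)
qed

lemma twisted_basis_Beven: "twisted_basis (Beven t) (2 * t)"
proof (induction t)
  case 0
  then show ?case using twisted_basis_one by simp
next
  case (Suc t)
  then have "Beven t \<subseteq> Wn (2 * t)" unfolding twisted_basis_def P_basis_def by auto
  then show ?case
    using twisted_basis_even_step[OF _ Suc.IH] by (simp del: Beven.simps add: Beven_Suc_lifts)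
qed

lemma P_basis_Bn: "P_basis (Bn n) n"
proof -
  have B: "Beven (n div 2) \<subseteq> Wn (2 * (n div 2))"
    using twisted_basis_Beven unfolding twisted_basis_def P_basis_def by auto
  show ?thesis
  proof (cases "even n")
    case True
    then show ?thesis using twisted_basis_Beven[of "n div 2"]
      by (simp add: Bn_def twisted_basis_def)
  next
    case False
    then have "Suc (2 * (n div 2)) = n" by presburger
    then show ?thesis using P_basis_odd_step[OF _ twisted_basis_Beven, of "n div 2"] False B
      by (simp add: Bn_def Bodd_lifts)
  qed
qed

section \<open>Relabelling \<open>[n] \<rightarrow> J\<close>\<close>

lemma relabel_empty [simp]: "relabel f {} = {}"
  by (simp add: relabel_def)

locale relabelling =
  fixes \<phi> :: "nat \<Rightarrow> nat" and n :: nat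
  assumes inj: "inj_on \<phi> {1..n}"
begin

definition relabel_mono :: "mono \<Rightarrow> mono" where
  "relabel_mono m = (\<phi> ` fst m, \<phi> ` snd m)"

definition in_range :: "mono set" where
  "in_range = {m. fst m \<subseteq> {1..n} \<and> snd m \<subseteq> {1..n}}"

lemma image_eq_iff: "A \<subseteq> {1..n} \<Longrightarrow> B \<subseteq> {1..n} \<Longrightarrow> \<phi> ` A = \<phi> ` B \<longleftrightarrow> A = B"
  using inj by (metis inj_on_image_eq_iff)

lemma inj_on_relabel_mono: "inj_on relabel_mono in_range"
  by (rule inj_onI) (auto simp: relabel_mono_def in_range_def image_eq_iff prod_eq_iff)

lemma monomials_in_range: "monomials n \<subseteq> in_range"
  by (intro subsetI) (simp add: in_range_def mem_monomials_iff)

lemma Wn_in_range: "a \<in> Wn n \<Longrightarrow> a \<subseteq> in_range"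
  using monomials_in_range by (auto simp: mem_Wn_iff)

lemma relabel_eq_image: "relabel \<phi> a = relabel_mono ` a"
  unfolding relabel_def relabel_mono_def by (rule image_cong) (auto split: prod.splits)

lemma card2_subsets_image:
  assumes "K0 \<subseteq> {1..n}"
  shows "{K. K \<subseteq> \<phi> ` K0 \<and> card K = 2} = (\<lambda>K. \<phi> ` K) ` {K. K \<subseteq> K0 \<and> card K = 2}"
proof -
  have card: "card (\<phi> ` K) = card K" if "K \<subseteq> K0" for K
    using that assms by (intro card_image inj_on_subset[OF inj]) auto
  have "K \<in> (\<lambda>K. \<phi> ` K) ` {K. K \<subseteq> K0 \<and> card K = 2}" if "K \<subseteq> \<phi> ` K0" "card K = 2" for K
  proof -
    define K' where "K' = {x \<in> K0. \<phi> x \<in> K}"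
    have "K = \<phi> ` K'" "K' \<subseteq> K0" unfolding K'_def using that(1) by auto
    then show ?thesis using that(2) card by auto
  qed
  then show ?thesis using card by auto
qed

lemma Pm_relabel_mono:
  assumes "m \<in> monomials n"
  shows "Pm (relabel_mono m) = relabel_mono ` Pm m"
proof -
  obtain I K0 where m: "m = (I, K0)" by (cases m)
  have IK: "I \<subseteq> {1..n}" "K0 \<subseteq> {1..n}" using assms m by (auto simp: mem_monomials_iff)
  have injK: "inj_on (\<lambda>K. \<phi> ` K) {K. K \<subseteq> K0 \<and> card K = 2}"
    using IK by (intro inj_onI) (auto simp: image_eq_iff)
  have "Pm (relabel_mono m) =
      sumF (\<lambda>K. mmul (K, {}) (\<phi> ` I, \<phi> ` K0 - K)) {K. K \<subseteq> \<phi> ` K0 \<and> card K = 2}"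
    by (simp add: Pm_def relabel_mono_def m)
  also have "\<dots> = sumF (\<lambda>K. mmul (\<phi> ` K, {}) (\<phi> ` I, \<phi> ` K0 - \<phi> ` K)) {K. K \<subseteq> K0 \<and> card K = 2}"
    unfolding card2_subsets_image[OF IK(2)] by (rule sumF_reindex[OF injK])
  also have "\<dots> = sumF (\<lambda>K. relabel_mono ` mmul (K, {}) (I, K0 - K)) {K. K \<subseteq> K0 \<and> card K = 2}"
  proof (rule sumF_cong)
    fix K assume "K \<in> {K. K \<subseteq> K0 \<and> card K = 2}"
    then have K: "K \<subseteq> {1..n}" using IK by auto
    have "\<phi> ` K \<inter> \<phi> ` I = {} \<longleftrightarrow> K \<inter> I = {}"
      using inj_on_image_Int[OF inj K IK(1)] by auto
    moreover have "\<phi> ` K0 - \<phi> ` K = \<phi> ` (K0 - K)"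
      by (rule inj_on_image_set_diff[OF inj, symmetric]) (use IK K in auto)
    ultimately show "mmul (\<phi> ` K, {}) (\<phi> ` I, \<phi> ` K0 - \<phi> ` K) =
        relabel_mono ` mmul (K, {}) (I, K0 - K)"
      by (simp add: mmul_left_t relabel_mono_def image_Un)
  qed
  also have "\<dots> = relabel_mono ` Pm m" unfolding Pm_def m
    by (simp, rule sumF_image_commute[OF _ inj_on_relabel_mono])
      (use IK in \<open>auto simp: mmul_left_t in_range_def split: if_splits\<close>)
  finally show ?thesis .
qed

lemma Pop_relabel:
  assumes "a \<in> Wn n"
  shows "Pop (relabel \<phi> a) = relabel \<phi> (Pop a)"
proof -
  have "Pop (relabel_mono ` a) = sumF (\<lambda>m. Pm (relabel_mono m)) a"
    unfolding Pop_def using inj_on_subset[OF inj_on_relabel_mono Wn_in_range[OF assms]]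
    by (rule sumF_reindex)
  also have "\<dots> = sumF (\<lambda>m. relabel_mono ` Pm m) a"
    by (rule sumF_cong) (use assms Pm_relabel_mono in \<open>auto simp: mem_Wn_iff\<close>)
  also have "\<dots> = relabel_mono ` Pop a" unfolding Pop_def
  proof (rule sumF_image_commute[OF _ inj_on_relabel_mono])
    fix m assume "m \<in> a"
    then have "m \<in> monomials n" using assms by (auto simp: mem_Wn_iff)
    then show "Pm m \<subseteq> in_range" using Pm_monomials monomials_in_range by blast
  qed
  finally show ?thesis by (simp add: relabel_eq_image)
qed

lemma relabel_eq_iff: "a \<in> Wn n \<Longrightarrow> b \<in> Wn n \<Longrightarrow> relabel \<phi> a = relabel \<phi> b \<longleftrightarrow> a = b"
  unfolding relabel_eq_image using inj_on_image_eq_iff[OF inj_on_relabel_mono] Wn_in_range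
  by blast

lemma Wn_additive_relabel: "Wn_additive n (relabel \<phi>)"
  unfolding Wn_additive_def relabel_eq_image
  by (auto intro!: image_radd inj_on_subset[OF inj_on_relabel_mono] dest: Wn_in_range)

lemma ssum_image_relabel:
  assumes "finite S" "S \<subseteq> Wn n"
  shows "ssum (relabel \<phi> ` S) = relabel \<phi> (ssum S)"
proof -
  have "inj_on (relabel \<phi>) S" using assms(2) relabel_eq_iff by (meson inj_onI subsetD)
  then have "ssum (relabel \<phi> ` S) = sumF (relabel \<phi>) S" by (simp add: sumF_reindex)
  also have "\<dots> = relabel \<phi> (ssum S)" using Wn_additive_relabel assms by (rule sumF_additive)
  finally show ?thesis .
qed

lemma image_relabel_mono_monomials:
  "relabel_mono ` monomials n = {(I, \<phi> ` {1..n} - I) | I. I \<subseteq> \<phi> ` {1..n}}"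
proof -
  have "monomials n = (\<lambda>I0. (I0, {1..n} - I0)) ` Pow {1..n}"
    unfolding monomials_def by auto
  then have "relabel_mono ` monomials n = (\<lambda>I0. relabel_mono (I0, {1..n} - I0)) ` Pow {1..n}"
    by (simp add: image_image)
  also have "\<dots> = (\<lambda>I0. (\<phi> ` I0, \<phi> ` {1..n} - \<phi> ` I0)) ` Pow {1..n}"
    by (rule image_cong[OF refl]) (simp add: relabel_mono_def inj_on_image_set_diff[OF inj])
  also have "\<dots> = (\<lambda>I. (I, \<phi> ` {1..n} - I)) ` (image \<phi> ` Pow {1..n})"
    by (simp add: image_image)
  also have "image \<phi> ` Pow {1..n} = Pow (\<phi> ` {1..n})" by (rule image_Pow_surj) (rule refl)
  finally show ?thesis by auto
qed

lemma image_relabel_Wn: "relabel \<phi> ` Wn n = WJ (\<phi> ` {1..n})"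
proof -
  have "Wn n = Pow (monomials n)" by (auto simp: mem_Wn_iff)
  then have "relabel \<phi> ` Wn n = image relabel_mono ` Pow (monomials n)"
    by (simp add: relabel_eq_image[abs_def])
  also have "\<dots> = Pow (relabel_mono ` monomials n)" by (rule image_Pow_surj) (rule refl)
  finally show ?thesis unfolding image_relabel_mono_monomials WJ_def by auto
qed

lemma P_basis_relabel_cycle:
  "P_basis B n \<Longrightarrow> b \<in> relabel \<phi> ` B \<Longrightarrow> b \<in> relabel \<phi> ` Wn n \<and> Pop b = {}"
  unfolding P_basis_def by (auto simp: Pop_relabel)

lemma P_basis_relabel_independent:
  assumes "P_basis B n" "S \<subseteq> relabel \<phi> ` B" "w \<in> Wn n" "ssum S = Pop (relabel \<phi> w)"
  shows "S = {}"
proof -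
  have B: "finite B" "B \<subseteq> Wn n" "P_independent B n"
    using assms(1) unfolding P_basis_def by auto
  define S0 where "S0 = {b \<in> B. relabel \<phi> b \<in> S}"
  have S0: "S0 \<subseteq> B" "S = relabel \<phi> ` S0" using assms(2) unfolding S0_def by auto
  then have "relabel \<phi> (ssum S0) = relabel \<phi> (Pop w)"
    using assms(3,4) B finite_subset[OF S0(1) B(1)] by (simp add: ssum_image_relabel Pop_relabel)
  then have "ssum S0 = Pop w"
    using assms(3) S0(1) B(2) by (simp add: relabel_eq_iff ssum_Wn)
  then have "S0 = {}" using P_independentD[OF B(3) S0(1)] assms(3) by simp
  then show ?thesis using S0(2) by simp
qed

lemma P_basis_relabel_spanning:
  assumes "P_basis B n" "z \<in> Wn n" "Pop (relabel \<phi> z) = {}"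
  shows "\<exists>S\<subseteq>relabel \<phi> ` B. \<exists>w\<in>Wn n. relabel \<phi> z = radd (ssum S) (Pop (relabel \<phi> w))"
proof -
  have B: "finite B" "B \<subseteq> Wn n" "P_spanning B n"
    using assms(1) unfolding P_basis_def by auto
  have "relabel \<phi> (Pop z) = relabel \<phi> {}" using assms(3) Pop_relabel[OF assms(2)] by simp
  then have "Pop z = {}" using relabel_eq_iff[OF Pop_Wn[OF assms(2)] empty_Wn] by simp
  from P_spanningD[OF B(3) assms(2) this] obtain S where
    "S \<subseteq> B" "radd z (ssum S) \<in> Pop ` Wn n"
    by blast
  then obtain w where S: "S \<subseteq> B" "w \<in> Wn n" "radd z (ssum S) = Pop w" by auto
  have "z = radd (ssum S) (Pop w)" using S(3) by (metis radd_cancel_left radd_commute)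
  moreover have "ssum S \<in> Wn n" "Pop w \<in> Wn n"
    using S(1,2) B(2) by (simp_all add: ssum_Wn subset_trans)
  ultimately have "relabel \<phi> z = radd (relabel \<phi> (ssum S)) (relabel \<phi> (Pop w))"
    using Wn_additive_relabel unfolding Wn_additive_def by simp
  also have "\<dots> = radd (ssum (relabel \<phi> ` S)) (Pop (relabel \<phi> w))"
    using S B finite_subset[OF S(1) B(1)] by (simp add: ssum_image_relabel Pop_relabel)
  finally show ?thesis
    using S(1,2) by (intro exI[of _ "relabel \<phi> ` S"] conjI bexI[of _ w]) auto
qed

lemma P_basis_relabel:
  assumes basis: "P_basis B n"
  shows "(\<forall>b \<in> relabel \<phi> ` B. b \<in> relabel \<phi> ` Wn n \<and> Pop b = {})
    \<and> (\<forall>S \<subseteq> relabel \<phi> ` B. (\<exists>w \<in> relabel \<phi> ` Wn n. ssum S = Pop w) \<longrightarrow> S = {})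
    \<and> (\<forall>z \<in> relabel \<phi> ` Wn n. Pop z = {} \<longrightarrow>
        (\<exists>S \<subseteq> relabel \<phi> ` B. \<exists>w \<in> relabel \<phi> ` Wn n. z = radd (ssum S) (Pop w)))"
proof -
  have "b \<in> relabel \<phi> ` Wn n \<and> Pop b = {}" if "b \<in> relabel \<phi> ` B" for b
    using that by (rule P_basis_relabel_cycle[OF basis])
  moreover have "S = {}"
    if S: "S \<subseteq> relabel \<phi> ` B" and bdry: "\<exists>w \<in> relabel \<phi> ` Wn n. ssum S = Pop w" for S
  proof -
    obtain w where "w \<in> Wn n" "ssum S = Pop (relabel \<phi> w)" using bdry by auto
    then show "S = {}" by (rule P_basis_relabel_independent[OF basis S])
  qed
  moreover have "\<exists>S \<subseteq> relabel \<phi> ` B. \<exists>w \<in> relabel \<phi> ` Wn n. z = radd (ssum S) (Pop w)"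
    if z: "z \<in> relabel \<phi> ` Wn n" "Pop z = {}" for z
  proof -
    obtain z0 where z0: "z0 \<in> Wn n" "z = relabel \<phi> z0" "Pop (relabel \<phi> z0) = {}"
      using z by auto
    then obtain S w where "S \<subseteq> relabel \<phi> ` B" "w \<in> Wn n"
        "relabel \<phi> z0 = radd (ssum S) (Pop (relabel \<phi> w))"
      using P_basis_relabel_spanning[OF basis z0(1,3)] by auto
    then show ?thesis using z0(2) by (intro exI[of _ S] conjI bexI[of _ "relabel \<phi> w"]) auto
  qed
  ultimately show ?thesis by auto
qed

end

lemma relabelling_phi: "finite J \<Longrightarrow> relabelling (phi J) (card J)"
proof
  assume "finite J"
  define xs where "xs = sorted_list_of_set J"
  have "distinct xs" "length xs = card J" unfolding xs_def using \<open>finite J\<close> by auto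
  then show "inj_on (phi J) {1..card J}"
    unfolding phi_def xs_def[symmetric] inj_on_def by (auto simp: nth_eq_iff_index_eq)
qed

lemma image_phi:
  assumes "finite J"
  shows "phi J ` {1..card J} = J"
proof -
  define xs where "xs = sorted_list_of_set J"
  have xs: "set xs = J" "length xs = card J" unfolding xs_def using assms by auto
  have "phi J ` {1..card J} = nth xs ` {0..<length xs}"
    unfolding image_Suc_lessThan[symmetric] image_image xs(2) phi_def xs_def
    by (simp add: lessThan_atLeast0)
  also have "\<dots> = J" using xs(1) by (simp add: nth_image)
  finally show ?thesis .
qed

text \<open>The relabelling works for every finite \<open>J\<close>.\<close>

theorem mainTheorem12:
  fixes J :: "nat set"
  assumes "finite J" and "0 \<notin> J"
  shows "(\<forall>b \<in> BJ J. b \<in> WJ J \<and> Pop b = {})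
       \<and> (\<forall>S \<subseteq> BJ J. (\<exists>w \<in> WJ J. sumF (\<lambda>b. b) S = Pop w) \<longrightarrow> S = {})
       \<and> (\<forall>z \<in> WJ J. Pop z = {} \<longrightarrow>
            (\<exists>S \<subseteq> BJ J. \<exists>w \<in> WJ J. z = radd (sumF (\<lambda>b. b) S) (Pop w)))"
proof -
  define n where "n = card J"
  interpret relabelling "phi J" n
    unfolding n_def using assms(1) by (rule relabelling_phi)
  have W: "WJ J = relabel (phi J) ` Wn n"
    using image_relabel_Wn image_phi[OF assms(1)] unfolding n_def by simp
  have B: "BJ J = relabel (phi J) ` Bn n"
    unfolding BJ_def n_def ..
  show ?thesis
    using P_basis_relabel[OF P_basis_Bn] unfolding W B .
qed

end
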